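(* Let $\beta\in B_n$ and let $p$ be an innermost point of the closure diagram of $\beta$. Then $\kappa(\beta)\le\kappa(S^p\beta)\le\kappa(\beta)+2$.
   Context: Work over $\mathbb{Z}/2$ with the Khovanov chain complex $\mathrm{CKh}$ of a link diagram (cube of resolutions, circles labeled $v_\pm$, Khovanov's merge/split differential). For $\beta\in B_n$ with closure $\bar\beta$ drawn around the braid axis, a circle in a resolution is nontrivial if it winds an odd number of times around the axis, trivial otherwise. The $k$-grading of a canonical generator is (number of nontrivial circles labeled $v_+$) minus (number of nontrivial circles labeled $v_-$); the differential does not increase $k$, so $\mathcal{F}_i=\mathrm{span}\{x:k(x)\le i\}$ are subcomplexes. The braidlike resolution ($0$-resolve positive, $1$-resolve negative crossings) has $n$ nontrivial circles; $\psi(\bar\beta)$ labels all of them $v_-$. Define $\kappa(\beta)=n+\min\{i:\psi(\bar\beta)=dy,\ y\in\mathcal{F}_i\}$ if $\psi(\bar\beta)$ is a boundary, $\kappa(\beta)=\infty$ otherwise. An arc of a closed braid diagram is a segment running from one crossing to another without passing through other crossings; it is innermost if every point on it can be joined to the braid axis by a straight segment meeting no other arcs; an innermost point is a point on an innermost arc. $S^p\beta\in B_{n+1}$ denotes the positive stabilization of $\beta$ obtained by inserting a crossing $\sigma_n$ at the innermost point $p$. *)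

theory Defs
  imports Main "HOL-Library.Extended_Real"
begin

text \<open>A braid word is a list of letters (i, s): the letter is the generator
  sigma_i if s = True and sigma_i inverse if s = False.  A letter sigma_i
  acts on the strand positions i and i+1 (positions are 1..n).  Position n is
  the position closest to the braid axis (this is the side on which the
  positive stabilization sigma_n adds the new strand n+1).\<close>

type_synonym bword = "(nat \<times> bool) list"

definition braid_word :: "nat \<Rightarrow> bword \<Rightarrow> bool" where
  "braid_word n w \<longleftrightarrow> 1 \<le> n \<and> (\<forall>(i, s) \<in> set w. 1 \<le> i \<and> i < n)"

text \<open>Segments of the closed braid diagram: (j, p) is the piece of strand at
  position p in gap j, i.e. just after letter j-1 and just before letter j
  (0 \<le> j \<le> length w); gap length w is glued to gap 0 by the closure.\<close>

type_synonym seg = "nat \<times> nat"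

definition segs :: "nat \<Rightarrow> bword \<Rightarrow> seg set" where
  "segs n w = {0..length w} \<times> {1..n}"

text \<open>A resolution is the set r of crossings (letter indices) that are
  1-resolved.  Crossing j is smoothed in the braidlike (oriented) way iff it is
  0-resolved and positive, or 1-resolved and negative.\<close>

definition braidlike_smoothed :: "bword \<Rightarrow> nat set \<Rightarrow> nat \<Rightarrow> bool" where
  "braidlike_smoothed w r j \<longleftrightarrow> ((j \<in> r) \<longleftrightarrow> \<not> snd (w ! j))"

definition edges :: "nat \<Rightarrow> bword \<Rightarrow> nat set \<Rightarrow> (seg \<times> seg) set" where
  "edges n w r =
     {((length w, p), (0, p)) | p. p \<in> {1..n}}
   \<union> {((j, p), (Suc j, p)) | j p. j < length w \<and> p \<in> {1..n}
        \<and> p \<noteq> fst (w ! j) \<and> p \<noteq> Suc (fst (w ! j))}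
   \<union> {((j, p), (Suc j, p)) | j p. j < length w \<and> braidlike_smoothed w r j
        \<and> (p = fst (w ! j) \<or> p = Suc (fst (w ! j)))}
   \<union> {((j, fst (w ! j)), (j, Suc (fst (w ! j)))) | j. j < length w \<and> \<not> braidlike_smoothed w r j}
   \<union> {((Suc j, fst (w ! j)), (Suc j, Suc (fst (w ! j)))) | j. j < length w \<and> \<not> braidlike_smoothed w r j}"

definition circles :: "nat \<Rightarrow> bword \<Rightarrow> nat set \<Rightarrow> seg set set" where
  "circles n w r =
     {{y. (x, y) \<in> (edges n w r \<union> (edges n w r)\<inverse>)\<^sup>*} | x. x \<in> segs n w}"

text \<open>A circle winds an odd number of times around the axis iff it meets the
  ray through gap 0 an odd number of times.\<close>

definition nontrivial :: "seg set \<Rightarrow> bool" where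
  "nontrivial C \<longleftrightarrow> odd (card {p. (0, p) \<in> C})"

text \<open>Canonical generators: (r, P) with r a resolution and P the set of circles
  of r labeled v+ (all other circles labeled v-).  Chains are finite sets of
  generators (sums over Z/2).\<close>

type_synonym kgen = "nat set \<times> seg set set"

definition gens :: "nat \<Rightarrow> bword \<Rightarrow> kgen set" where
  "gens n w = {(r, P). r \<subseteq> {..<length w} \<and> P \<subseteq> circles n w r}"

definition kgr :: "nat \<Rightarrow> bword \<Rightarrow> kgen \<Rightarrow> int" where
  "kgr n w x = int (card {C \<in> snd x. nontrivial C})
              - int (card {C \<in> circles n w (fst x) - snd x. nontrivial C})"

text \<open>Coefficient of the edge map from (r,P) to (r',Q), r' = r plus one crossing:
  Khovanov's merge m(v+ v+) = v+, m(v+ v-) = m(v- v+) = v-, m(v- v-) = 0 and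
  split D(v+) = v+ v- + v- v+, D(v-) = v- v-, identity on unchanged circles.\<close>

definition kh_coeff :: "nat \<Rightarrow> bword \<Rightarrow> kgen \<Rightarrow> kgen \<Rightarrow> bool" where
  "kh_coeff n w x y =
    (let r = fst x; P = snd x; r' = fst y; Q = snd y;
         A = circles n w r - circles n w r'; B = circles n w r' - circles n w r in
     (\<forall>C \<in> circles n w r \<inter> circles n w r'. C \<in> P \<longleftrightarrow> C \<in> Q) \<and>
     ((\<exists>a1 a2 b. a1 \<noteq> a2 \<and> A = {a1, a2} \<and> B = {b} \<and>
         ((a1 \<in> P \<and> a2 \<in> P \<and> b \<in> Q) \<or> ((a1 \<in> P) \<noteq> (a2 \<in> P) \<and> b \<notin> Q)))
      \<or>
      (\<exists>a b1 b2. b1 \<noteq> b2 \<and> A = {a} \<and> B = {b1, b2} \<and>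
         ((a \<in> P \<and> (b1 \<in> Q) \<noteq> (b2 \<in> Q)) \<or> (a \<notin> P \<and> b1 \<notin> Q \<and> b2 \<notin> Q)))))"

definition kd :: "nat \<Rightarrow> bword \<Rightarrow> kgen \<Rightarrow> kgen set" where
  "kd n w x = {y \<in> gens n w. \<exists>c < length w. c \<notin> fst x \<and> fst y = insert c (fst x)
                                 \<and> kh_coeff n w x y}"

definition kd_chain :: "nat \<Rightarrow> bword \<Rightarrow> kgen set \<Rightarrow> kgen set" where
  "kd_chain n w X = {y. odd (card {x \<in> X. y \<in> kd n w x})}"

definition filt :: "nat \<Rightarrow> bword \<Rightarrow> int \<Rightarrow> kgen set set" where
  "filt n w i = {X. finite X \<and> X \<subseteq> gens n w \<and> (\<forall>x \<in> X. kgr n w x \<le> i)}"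

text \<open>psi: braidlike resolution, all (nontrivial) circles labeled v-.\<close>

definition psi :: "bword \<Rightarrow> kgen" where
  "psi w = ({j. j < length w \<and> \<not> snd (w ! j)}, {})"

definition kappa :: "nat \<Rightarrow> bword \<Rightarrow> ereal" where
  "kappa n w =
     (if \<exists>i. \<exists>X \<in> filt n w i. kd_chain n w X = {psi w}
      then ereal (real_of_int (int n + (LEAST i. \<exists>X \<in> filt n w i. kd_chain n w X = {psi w})))
      else \<infinity>)"

text \<open>Points on arcs of the closure diagram are represented by segments (j,p);
  the innermost ones are exactly those at position n (closest to the axis).\<close>

definition innermost_point :: "nat \<Rightarrow> bword \<Rightarrow> seg \<Rightarrow> bool" where
  "innermost_point n w q \<longleftrightarrow> q \<in> segs n w \<and> snd q = n"

definition stabilize :: "nat \<Rightarrow> bword \<Rightarrow> seg \<Rightarrow> bword" where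
  "stabilize n w q = take (fst q) w @ [(n, True)] @ drop (fst q) w"

end

theory Submission
  imports Defs
begin

text \<open>Stabilizing at an innermost point adds a strand n+1 next to the axis and a positive crossing
  \<sigma>_n.  In a resolution of the stabilized diagram with the new crossing 0-resolved, the new strand
  is an extra nontrivial circle x and the other circles are those of the corresponding resolution
  of the original diagram; with the new crossing 1-resolved, x is merged into the circle through
  the stabilization point, the marked circle.  Labelling x by v- embeds the complex of \<beta> into
  that of S^p \<beta>, lowering k by one and sending \<psi> to \<psi>.

  If \<psi>(S^p \<beta>) = d Y', the generators of Y' in the image of this embedding form a chain Y with
  d Y = \<psi>(\<beta>) one filtration level higher, so \<kappa>(\<beta>) \<le> \<kappa>(S^p \<beta>).  Conversely, if \<psi>(\<beta>) = d Y,
  then Y \<otimes> v- + (X Y) \<otimes> v+, where X lowers the label of the marked circle, has boundary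
  \<psi>(S^p \<beta>): X commutes with d, and at generators with the new crossing 1-resolved the two
  summands cancel because merging x with the marked circle treats v+ v- and v- v+ alike.  Its
  filtration level exceeds that of Y by at most one and the braid index grows by one, so
  \<kappa>(S^p \<beta>) \<le> \<kappa>(\<beta>) + 2.\<close>

section \<open>Connected components of an undirected graph\<close>

definition conn :: "('a \<times> 'a) set \<Rightarrow> ('a \<times> 'a) set" where
  "conn E = (E \<union> E\<inverse>)\<^sup>*"

definition component :: "('a \<times> 'a) set \<Rightarrow> 'a \<Rightarrow> 'a set" where
  "component E x = {y. (x, y) \<in> conn E}"

lemma conn_refl[simp]: "(x,x) \<in> conn E" by (simp add: conn_def)
lemma conn_sym: "(x,y) \<in> conn E \<Longrightarrow> (y,x) \<in> conn E"
  unfolding conn_def by (metis converse_Un converse_converse converse_iff rtrancl_converseI sup_commute)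
lemma conn_trans: "(x,y) \<in> conn E \<Longrightarrow> (y,z) \<in> conn E \<Longrightarrow> (x,z) \<in> conn E"
  unfolding conn_def by (rule rtrancl_trans)
lemma conn_edge: "(x,y) \<in> E \<Longrightarrow> (x,y) \<in> conn E"
  unfolding conn_def by auto
lemma conn_edge_rev: "(x,y) \<in> E \<Longrightarrow> (y,x) \<in> conn E"
  unfolding conn_def by auto

lemma conn_closed: assumes "E \<subseteq> D \<times> D" "(a,b) \<in> conn E" "a \<in> D" shows "b \<in> D"
  using assms(2,3) unfolding conn_def
  by (induction rule: rtrancl_induct) (use assms(1) in auto)

lemma component_self: "x \<in> component E x" by (simp add: component_def)

lemma component_eq: assumes "y \<in> component E x" shows "component E y = component E x"
proof -
  have xy: "(x,y) \<in> conn E" using assms by (simp add: component_def)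
  then have yx: "(y,x) \<in> conn E" by (rule conn_sym)
  show ?thesis unfolding component_def using conn_trans[OF xy] conn_trans[OF yx] by blast
qed

lemma component_isolated: "x \<notin> Domain E \<Longrightarrow> x \<notin> Range E \<Longrightarrow> component E x = {x}"
proof -
  assume "x \<notin> Domain E" "x \<notin> Range E"
  have "(x,y) \<in> conn E \<Longrightarrow> y = x" for y
    unfolding conn_def
    by (induction rule: rtrancl_induct) (use \<open>x \<notin> Domain E\<close> \<open>x \<notin> Range E\<close> in auto)
  then show ?thesis unfolding component_def by auto
qed

locale graph_collapse =
  fixes E' :: "('b \<times> 'b) set" and D :: "'b set" and \<phi> :: "'b \<Rightarrow> 'a" and E :: "('a \<times> 'a) set"
  assumes edges_in: "E' \<subseteq> D \<times> D"
    and edge_image: "\<And>a b. (a,b) \<in> E' \<Longrightarrow> \<phi> a = \<phi> b \<or> (\<phi> a, \<phi> b) \<in> E \<union> E\<inverse>"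
    and edge_lift: "\<And>u v. (u,v) \<in> E \<Longrightarrow> \<exists>a\<in>D. \<exists>b\<in>D. \<phi> a = u \<and> \<phi> b = v \<and> (a,b) \<in> conn E'"
    and fibre_conn: "\<And>a b. a \<in> D \<Longrightarrow> b \<in> D \<Longrightarrow> \<phi> a = \<phi> b \<Longrightarrow> (a,b) \<in> conn E'"
begin

lemma conn_image: "(a,b) \<in> conn E' \<Longrightarrow> (\<phi> a, \<phi> b) \<in> conn E"
  unfolding conn_def
proof (induction rule: rtrancl_induct)
  case (step y z)
  have "\<phi> y = \<phi> z \<or> (\<phi> y, \<phi> z) \<in> E \<union> E\<inverse>" using step(2) edge_image[of y z] edge_image[of z y] by auto
  then show ?case
  proof
    assume "\<phi> y = \<phi> z" then show ?case using step(3) by simp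
  next
    assume "(\<phi> y, \<phi> z) \<in> E \<union> E\<inverse>"
    then show ?case using step(3) by (rule rtrancl.rtrancl_into_rtrancl[rotated])
  qed
qed simp

lemma edge_lift_sym:
  assumes "(u,v) \<in> E \<union> E\<inverse>"
  shows "\<exists>a\<in>D. \<exists>b\<in>D. \<phi> a = u \<and> \<phi> b = v \<and> (a,b) \<in> conn E'"
proof (cases "(u,v) \<in> E")
  case False
  then have "(v,u) \<in> E" using assms by blast
  from edge_lift[OF this] obtain a b where ab: "a \<in> D" "b \<in> D" "\<phi> a = v" "\<phi> b = u" "(a,b) \<in> conn E'"
    by blast
  from ab(5) have "(b,a) \<in> conn E'" by (rule conn_sym)
  with ab(1-4) show ?thesis by blast
qed (rule edge_lift)

lemma conn_lift:
  assumes a: "a \<in> D" and b: "b \<in> D" and ab: "(\<phi> a, \<phi> b) \<in> conn E"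
  shows "(a,b) \<in> conn E'"
proof -
  have key: "(\<phi> a, v) \<in> (E \<union> E\<inverse>)\<^sup>* \<Longrightarrow> b' \<in> D \<Longrightarrow> \<phi> b' = v \<Longrightarrow> (a,b') \<in> conn E'" for v b'
  proof (induction arbitrary: b' rule: rtrancl_induct)
    case base then show ?case using fibre_conn[OF a, of b'] by simp
  next
    case (step u v b')
    obtain a1 b1 where ab1: "a1 \<in> D" "b1 \<in> D" "\<phi> a1 = u" "\<phi> b1 = v" "(a1,b1) \<in> conn E'"
      using edge_lift_sym[OF step(2)] by blast
    have "(a,a1) \<in> conn E'" using step(3)[OF ab1(1,3)] .
    moreover have "(b1,b') \<in> conn E'" using fibre_conn[OF ab1(2) step(4)] ab1(4) step(5) by simp
    ultimately show ?case using ab1(5) conn_trans by metis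
  qed
  show ?thesis using key[OF _ b refl] ab unfolding conn_def by blast
qed

lemma component_eq_preimage:
  assumes a: "a \<in> D"
  shows "component E' a = {b \<in> D. \<phi> b \<in> component E (\<phi> a)}"
proof (intro set_eqI iffI)
  fix b assume "b \<in> component E' a"
  then have "(a,b) \<in> conn E'" by (simp add: component_def)
  then show "b \<in> {b \<in> D. \<phi> b \<in> component E (\<phi> a)}"
    using conn_image conn_closed[OF edges_in _ a] by (simp add: component_def)
next
  fix b assume "b \<in> {b \<in> D. \<phi> b \<in> component E (\<phi> a)}"
  then show "b \<in> component E' a" using conn_lift[OF a] by (simp add: component_def)
qed

lemma components_eq_preimages:
  "{component E' a | a. a \<in> D} = (\<lambda>C. {b \<in> D. \<phi> b \<in> C}) ` {component E u | u. u \<in> \<phi> ` D}"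
proof -
  have "{component E' a | a. a \<in> D} = component E' ` D" by blast
  also have "\<dots> = (\<lambda>a. {b \<in> D. \<phi> b \<in> component E (\<phi> a)}) ` D"
    by (rule image_cong[OF refl component_eq_preimage])
  also have "\<dots> = (\<lambda>C. {b \<in> D. \<phi> b \<in> C}) ` (component E ` \<phi> ` D)"
    by (simp add: image_image)
  also have "component E ` \<phi> ` D = {component E u | u. u \<in> \<phi> ` D}" by blast
  finally show ?thesis .
qed

end

section \<open>Circles of a closed braid diagram\<close>

lemma circles_eq_components: "circles n w r = {component (edges n w r) x | x. x \<in> segs n w}"
  unfolding circles_def component_def conn_def ..

lemma edgesE:
  assumes "(x,y) \<in> edges n w r"
  obtains (closure) p where "p \<in> {1..n}" "x = (length w,p)" "y = (0,p)"
  | (passing) j p where "j < length w" "p \<in> {1..n}" "p \<noteq> fst (w!j)" "p \<noteq> Suc (fst (w!j))" "x = (j,p)" "y = (Suc j,p)"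
  | (smooth) j p where "j < length w" "braidlike_smoothed w r j" "p = fst (w!j) \<or> p = Suc (fst (w!j))" "x = (j,p)" "y = (Suc j,p)"
  | (turn_low) j where "j < length w" "\<not> braidlike_smoothed w r j" "x = (j, fst (w!j))" "y = (j, Suc (fst (w!j)))"
  | (turn_high) j where "j < length w" "\<not> braidlike_smoothed w r j" "x = (Suc j, fst (w!j))" "y = (Suc j, Suc (fst (w!j)))"
  using assms unfolding edges_def
  apply (elim UnE CollectE exE conjE)
  apply (simp_all only: prod.inject)
  apply (elim conjE)
  apply blast+
  done

lemma edges_closure: "p \<in> {1..n} \<Longrightarrow> ((length w,p),(0,p)) \<in> edges n w r"
  unfolding edges_def by (intro UnI1) auto
lemma edges_passing: "j < length w \<Longrightarrow> p \<in> {1..n} \<Longrightarrow> p \<noteq> fst (w!j) \<Longrightarrow> p \<noteq> Suc (fst (w!j)) \<Longrightarrow> ((j,p),(Suc j,p)) \<in> edges n w r"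
  unfolding edges_def apply (rule UnI1, rule UnI1, rule UnI1, rule UnI2) by auto
lemma edges_smooth: "j < length w \<Longrightarrow> braidlike_smoothed w r j \<Longrightarrow> p = fst (w!j) \<or> p = Suc (fst (w!j)) \<Longrightarrow> ((j,p),(Suc j,p)) \<in> edges n w r"
  unfolding edges_def apply (rule UnI1, rule UnI1, rule UnI2) by auto
lemma edges_turn_low: "j < length w \<Longrightarrow> \<not> braidlike_smoothed w r j \<Longrightarrow> ((j, fst (w!j)),(j, Suc (fst (w!j)))) \<in> edges n w r"
  unfolding edges_def apply (rule UnI1, rule UnI2) by auto
lemma edges_turn_high: "j < length w \<Longrightarrow> \<not> braidlike_smoothed w r j \<Longrightarrow> ((Suc j, fst (w!j)),(Suc j, Suc (fst (w!j)))) \<in> edges n w r"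
  unfolding edges_def apply (rule UnI2) by auto

definition letters_in_range :: "nat \<Rightarrow> bword \<Rightarrow> bool" where
  "letters_in_range n w \<longleftrightarrow> (\<forall>j < length w. 1 \<le> fst (w!j) \<and> fst (w!j) < n)"

lemma braid_word_letters_in_range: "braid_word n w \<Longrightarrow> letters_in_range n w"
  unfolding braid_word_def letters_in_range_def
  by (metis (mono_tags, lifting) case_prodD nth_mem prod.collapse)

lemma edges_segs: assumes "letters_in_range n w" shows "edges n w r \<subseteq> segs n w \<times> segs n w"
proof
  fix z assume "z \<in> edges n w r"
  then obtain x y where z: "z = (x,y)" "(x,y) \<in> edges n w r" by (cases z) auto
  from z(2) show "z \<in> segs n w \<times> segs n w"
    by (cases rule: edgesE) (use assms z(1) in \<open>auto simp: segs_def letters_in_range_def\<close>)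
qed

lemma conn_horizontal_run:
  assumes "\<And>j. j1 \<le> j \<Longrightarrow> j < j2 \<Longrightarrow> ((j,p),(Suc j,p)) \<in> E" "j1 \<le> j2"
  shows "((j1,p),(j2,p)) \<in> conn E"
  using assms
proof (induction j2)
  case 0 then show ?case by simp
next
  case (Suc k)
  show ?case
  proof (cases "j1 = Suc k")
    case True then show ?thesis by simp
  next
    case False
    then have "((j1,p),(k,p)) \<in> conn E" using Suc by auto
    moreover have "((k,p),(Suc k,p)) \<in> E" using Suc False by auto
    ultimately show ?thesis using conn_trans conn_edge by metis
  qed
qed

lemma circle_subset_segs: "letters_in_range n w \<Longrightarrow> C \<in> circles n w r \<Longrightarrow> C \<subseteq> segs n w"
  unfolding circles_eq_components component_def using conn_closed[OF edges_segs] by blast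

lemma finite_segs: "finite (segs n w)" by (simp add: segs_def)

lemma finite_circles: "finite (circles n w r)"
proof -
  have "circles n w r = (\<lambda>x. component (edges n w r) x) ` segs n w" unfolding circles_eq_components by auto
  then show ?thesis using finite_segs by simp
qed

lemma circle_eq_component: "C \<in> circles n w r \<Longrightarrow> x \<in> C \<Longrightarrow> C = component (edges n w r) x"
proof -
  assume "C \<in> circles n w r" "x \<in> C"
  then obtain y where "C = component (edges n w r) y" unfolding circles_eq_components by blast
  then show ?thesis using component_eq[of x "edges n w r" y] \<open>x \<in> C\<close> by simp
qed

lemma circles_disjoint: "C \<in> circles n w r \<Longrightarrow> C' \<in> circles n w r \<Longrightarrow> x \<in> C \<Longrightarrow> x \<in> C' \<Longrightarrow> C = C'"
proof -
  assume "C \<in> circles n w r" "C' \<in> circles n w r" "x \<in> C" "x \<in> C'"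
  then show ?thesis using circle_eq_component[of C n w r x] circle_eq_component[of C' n w r x] by simp
qed

lemma component_in_circles: "x \<in> segs n w \<Longrightarrow> component (edges n w r) x \<in> circles n w r"
  unfolding circles_eq_components by blast

section \<open>The edge maps of the Khovanov complex\<close>

text \<open>The coefficient kh_coeff, with the circles sorted into those common to both resolutions (I),
  those only in the source (A) and those only in the target (B).\<close>

definition kh_local :: "'c set \<Rightarrow> 'c set \<Rightarrow> 'c set \<Rightarrow> 'c set \<Rightarrow> 'c set \<Rightarrow> bool" where
  "kh_local I A B P Q =
    ((\<forall>C \<in> I. C \<in> P \<longleftrightarrow> C \<in> Q) \<and>
     ((\<exists>a1 a2 b. a1 \<noteq> a2 \<and> A = {a1, a2} \<and> B = {b} \<and>
         ((a1 \<in> P \<and> a2 \<in> P \<and> b \<in> Q) \<or> ((a1 \<in> P) \<noteq> (a2 \<in> P) \<and> b \<notin> Q)))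
      \<or>
      (\<exists>a b1 b2. b1 \<noteq> b2 \<and> A = {a} \<and> B = {b1, b2} \<and>
         ((a \<in> P \<and> (b1 \<in> Q) \<noteq> (b2 \<in> Q)) \<or> (a \<notin> P \<and> b1 \<notin> Q \<and> b2 \<notin> Q)))))"

lemma kh_localE:
  assumes "kh_local I A B P Q"
  obtains (merge) a1 a2 b where "\<forall>C\<in>I. C \<in> P \<longleftrightarrow> C \<in> Q" "a1 \<noteq> a2" "A = {a1, a2}" "B = {b}"
      "(a1 \<in> P \<and> a2 \<in> P \<and> b \<in> Q) \<or> ((a1 \<in> P) \<noteq> (a2 \<in> P) \<and> b \<notin> Q)"
  | (split) a b1 b2 where "\<forall>C\<in>I. C \<in> P \<longleftrightarrow> C \<in> Q" "b1 \<noteq> b2" "A = {a}" "B = {b1, b2}"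
      "(a \<in> P \<and> (b1 \<in> Q) \<noteq> (b2 \<in> Q)) \<or> (a \<notin> P \<and> b1 \<notin> Q \<and> b2 \<notin> Q)"
  using assms unfolding kh_local_def by blast

lemma kh_local_mergeI:
  assumes "\<forall>C\<in>I. C \<in> P \<longleftrightarrow> C \<in> Q" "a1 \<noteq> a2" "A = {a1, a2}" "B = {b}"
    "(a1 \<in> P \<and> a2 \<in> P \<and> b \<in> Q) \<or> ((a1 \<in> P) \<noteq> (a2 \<in> P) \<and> b \<notin> Q)"
  shows "kh_local I A B P Q"
  using assms unfolding kh_local_def by blast

lemma kh_local_splitI:
  assumes "\<forall>C\<in>I. C \<in> P \<longleftrightarrow> C \<in> Q" "b1 \<noteq> b2" "A = {a}" "B = {b1, b2}"
    "(a \<in> P \<and> (b1 \<in> Q) \<noteq> (b2 \<in> Q)) \<or> (a \<notin> P \<and> b1 \<notin> Q \<and> b2 \<notin> Q)"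
  shows "kh_local I A B P Q"
  using assms unfolding kh_local_def by blast

lemma kh_local_cong_imp:
  assumes eq: "\<forall>x\<in>I \<union> A \<union> B. (x \<in> P \<longleftrightarrow> x \<in> P2) \<and> (x \<in> Q \<longleftrightarrow> x \<in> Q2)"
    and k: "kh_local I A B P Q"
  shows "kh_local I A B P2 Q2"
proof -
  have common: "\<forall>C\<in>I. C \<in> P2 \<longleftrightarrow> C \<in> Q2" if "\<forall>C\<in>I. C \<in> P \<longleftrightarrow> C \<in> Q"
    using that eq by blast
  from k show ?thesis
  proof (cases rule: kh_localE)
    case (merge a1 a2 b)
    note c = merge(1) and m = merge(2-5)
    have "(a1 \<in> P2 \<longleftrightarrow> a1 \<in> P) \<and> (a2 \<in> P2 \<longleftrightarrow> a2 \<in> P) \<and> (b \<in> Q2 \<longleftrightarrow> b \<in> Q)"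
      using eq m(2,3) by blast
    with m(4) have "(a1 \<in> P2 \<and> a2 \<in> P2 \<and> b \<in> Q2) \<or> ((a1 \<in> P2) \<noteq> (a2 \<in> P2) \<and> b \<notin> Q2)"
      by simp
    then show ?thesis by (rule kh_local_mergeI[OF common[OF c] m(1-3)])
  next
    case (split a b1 b2)
    note c = split(1) and m = split(2-5)
    have "(a \<in> P2 \<longleftrightarrow> a \<in> P) \<and> (b1 \<in> Q2 \<longleftrightarrow> b1 \<in> Q) \<and> (b2 \<in> Q2 \<longleftrightarrow> b2 \<in> Q)"
      using eq m(2,3) by blast
    with m(4) have "(a \<in> P2 \<and> (b1 \<in> Q2) \<noteq> (b2 \<in> Q2)) \<or> (a \<notin> P2 \<and> b1 \<notin> Q2 \<and> b2 \<notin> Q2)"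
      by simp
    then show ?thesis by (rule kh_local_splitI[OF common[OF c] m(1-3)])
  qed
qed

lemma kh_local_image_imp:
  assumes inj: "inj_on h U" and U: "I \<union> A \<union> B \<subseteq> U" "P \<subseteq> U" "Q \<subseteq> U"
    and k: "kh_local I A B P Q"
  shows "kh_local (h ` I) (h ` A) (h ` B) (h ` P) (h ` Q)"
proof -
  have mem: "h x \<in> h ` S \<longleftrightarrow> x \<in> S" if "x \<in> U" "S \<subseteq> U" for x S
    using inj that by (simp add: inj_on_image_mem_iff)
  have ne: "h x \<noteq> h y" if "x \<in> U" "y \<in> U" "x \<noteq> y" for x y
    using inj that by (auto dest: inj_onD)
  have common: "\<forall>C \<in> h ` I. C \<in> h ` P \<longleftrightarrow> C \<in> h ` Q" if "\<forall>C\<in>I. (C \<in> P) = (C \<in> Q)"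
  proof
    fix C assume "C \<in> h ` I"
    then obtain c where c: "c \<in> I" "C = h c" by blast
    then have "c \<in> U" using U(1) by blast
    then show "C \<in> h ` P \<longleftrightarrow> C \<in> h ` Q" using that c mem[of c P] mem[of c Q] U(2,3) by simp
  qed
  from k show ?thesis
  proof (cases rule: kh_localE)
    case (merge a1 a2 b)
    note c = merge(1) and m = merge(2-5)
    have U': "a1 \<in> U" "a2 \<in> U" "b \<in> U" using U m(2,3) by auto
    show ?thesis
    proof (rule kh_local_mergeI[OF common[OF c]])
      show "h a1 \<noteq> h a2" using ne[OF U'(1,2) m(1)] .
      show "h ` A = {h a1, h a2}" "h ` B = {h b}" using m(2,3) by simp_all
      show "(h a1 \<in> h ` P \<and> h a2 \<in> h ` P \<and> h b \<in> h ` Q) \<or> ((h a1 \<in> h ` P) \<noteq> (h a2 \<in> h ` P) \<and> h b \<notin> h ` Q)"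
        using m(4) by (simp add: mem U(2,3) U')
    qed
  next
    case (split a b1 b2)
    note c = split(1) and m = split(2-5)
    have U': "a \<in> U" "b1 \<in> U" "b2 \<in> U" using U m(2,3) by auto
    show ?thesis
    proof (rule kh_local_splitI[OF common[OF c]])
      show "h b1 \<noteq> h b2" using ne[OF U'(2,3) m(1)] .
      show "h ` A = {h a}" "h ` B = {h b1, h b2}" using m(2,3) by simp_all
      show "(h a \<in> h ` P \<and> (h b1 \<in> h ` Q) \<noteq> (h b2 \<in> h ` Q)) \<or> (h a \<notin> h ` P \<and> h b1 \<notin> h ` Q \<and> h b2 \<notin> h ` Q)"
        using m(4) by (simp add: mem U(2,3) U')
    qed
  qed
qed

definition kh_coeff_on :: "'c set \<Rightarrow> 'c set \<Rightarrow> 'c set \<Rightarrow> 'c set \<Rightarrow> bool" where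
  "kh_coeff_on Cr Cr' P Q = kh_local (Cr \<inter> Cr') (Cr - Cr') (Cr' - Cr) P Q"

lemma kh_local_image:
  assumes inj: "inj_on h U" and U: "I \<union> A \<union> B \<subseteq> U" "P \<subseteq> U" "Q \<subseteq> U"
  shows "kh_local (h ` I) (h ` A) (h ` B) (h ` P) (h ` Q) = kh_local I A B P Q"
proof
  assume k: "kh_local (h ` I) (h ` A) (h ` B) (h ` P) (h ` Q)"
  define hi where "hi = inv_into U h"
  have inj': "inj_on hi (h ` U)" unfolding hi_def by (rule inj_on_inv_into) simp
  have cancel: "X \<subseteq> U \<Longrightarrow> hi ` h ` X = X" for X using inj by (simp add: image_inv_into_cancel hi_def)
  have "kh_local (hi ` h ` I) (hi ` h ` A) (hi ` h ` B) (hi ` h ` P) (hi ` h ` Q)"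
    by (rule kh_local_image_imp[OF inj' _ _ _ k]) (use U in auto)
  then show "kh_local I A B P Q" using cancel U by simp
qed (rule kh_local_image_imp[OF assms])

lemma kh_coeff_on_image:
  assumes inj: "inj_on h U" and U: "Cr \<subseteq> U" "Cr' \<subseteq> U" "P \<subseteq> U" "Q \<subseteq> U"
  shows "kh_coeff_on (h ` Cr) (h ` Cr') (h ` P) (h ` Q) = kh_coeff_on Cr Cr' P Q"
proof -
  have "h ` Cr \<inter> h ` Cr' = h ` (Cr \<inter> Cr')" "h ` Cr - h ` Cr' = h ` (Cr - Cr')"
    "h ` Cr' - h ` Cr = h ` (Cr' - Cr)"
    using inj_on_image_Int[OF inj U(1,2)] by simp
     (rule inj_on_image_set_diff[OF inj, symmetric]; use U in blast)+
  moreover have "kh_local (h ` (Cr \<inter> Cr')) (h ` (Cr - Cr')) (h ` (Cr' - Cr)) (h ` P) (h ` Q)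
      = kh_local (Cr \<inter> Cr') (Cr - Cr') (Cr' - Cr) P Q"
    by (rule kh_local_image[OF inj]) (use U in auto)
  ultimately show ?thesis unfolding kh_coeff_on_def by simp
qed

lemma kh_local_cong:
  assumes eq: "\<forall>x\<in>I \<union> A \<union> B. (x \<in> P \<longleftrightarrow> x \<in> P2) \<and> (x \<in> Q \<longleftrightarrow> x \<in> Q2)"
  shows "kh_local I A B P Q = kh_local I A B P2 Q2"
proof
  show "kh_local I A B P Q \<Longrightarrow> kh_local I A B P2 Q2" by (rule kh_local_cong_imp[OF eq])
  have eq2: "\<forall>x\<in>I \<union> A \<union> B. (x \<in> P2 \<longleftrightarrow> x \<in> P) \<and> (x \<in> Q2 \<longleftrightarrow> x \<in> Q)" using eq by blast
  show "kh_local I A B P2 Q2 \<Longrightarrow> kh_local I A B P Q" by (rule kh_local_cong_imp[OF eq2])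
qed

lemma kh_local_insert_common: "kh_local (insert X I) A B P Q = ((X \<in> P \<longleftrightarrow> X \<in> Q) \<and> kh_local I A B P Q)"
  unfolding kh_local_def by auto

lemma kh_coeff_on_insert:
  assumes "X \<notin> Cr" "X \<notin> Cr'"
  shows "kh_coeff_on (insert X Cr) (insert X Cr') P Q = ((X \<in> P \<longleftrightarrow> X \<in> Q) \<and> kh_coeff_on Cr Cr' (P - {X}) (Q - {X}))"
proof -
  have 1: "insert X Cr \<inter> insert X Cr' = insert X (Cr \<inter> Cr')" by auto
  have 2: "insert X Cr - insert X Cr' = Cr - Cr'" "insert X Cr' - insert X Cr = Cr' - Cr" using assms by auto
  have 3: "kh_local (Cr \<inter> Cr') (Cr - Cr') (Cr' - Cr) P Q = kh_local (Cr \<inter> Cr') (Cr - Cr') (Cr' - Cr) (P - {X}) (Q - {X})"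
    by (rule kh_local_cong) (use assms in auto)
  show ?thesis unfolding kh_coeff_on_def 1 2 kh_local_insert_common 3 ..
qed

lemma kh_local_merge:
  assumes "a \<noteq> a'"
  shows "kh_local I {a, a'} {m} P Q \<longleftrightarrow> (\<forall>C \<in> I. C \<in> P \<longleftrightarrow> C \<in> Q) \<and>
     ((a \<in> P \<and> a' \<in> P \<and> m \<in> Q) \<or> ((a \<in> P) \<noteq> (a' \<in> P) \<and> m \<notin> Q))"
proof
  assume "kh_local I {a, a'} {m} P Q"
  then show "(\<forall>C \<in> I. C \<in> P \<longleftrightarrow> C \<in> Q) \<and> ((a \<in> P \<and> a' \<in> P \<and> m \<in> Q) \<or> ((a \<in> P) \<noteq> (a' \<in> P) \<and> m \<notin> Q))"
  proof (cases rule: kh_localE)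
    case (merge a1 a2 b)
    then show ?thesis unfolding doubleton_eq_iff by auto
  next
    case (split x b1 b2)
    then show ?thesis using assms by (metis insertI1 insert_commute singletonD)
  qed
qed (use assms in \<open>auto intro: kh_local_mergeI\<close>)

lemma kh_local_split:
  assumes "m \<noteq> m'"
  shows "kh_local I {x} {m, m'} P Q \<longleftrightarrow> (\<forall>C \<in> I. C \<in> P \<longleftrightarrow> C \<in> Q) \<and>
     ((x \<in> P \<and> (m \<in> Q) \<noteq> (m' \<in> Q)) \<or> (x \<notin> P \<and> m \<notin> Q \<and> m' \<notin> Q))"
proof
  assume "kh_local I {x} {m, m'} P Q"
  then show "(\<forall>C \<in> I. C \<in> P \<longleftrightarrow> C \<in> Q) \<and> ((x \<in> P \<and> (m \<in> Q) \<noteq> (m' \<in> Q)) \<or> (x \<notin> P \<and> m \<notin> Q \<and> m' \<notin> Q))"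
  proof (cases rule: kh_localE)
    case (merge a1 a2 b)
    then show ?thesis by (metis insertI1 insert_commute singletonD)
  next
    case (split a b1 b2)
    then show ?thesis unfolding doubleton_eq_iff by auto
  qed
qed (use assms in \<open>auto intro: kh_local_splitI\<close>)

lemma kh_local_shapeE:
  assumes "kh_local I A B P Q" "a \<in> A" "b \<in> B"
  obtains (merge) a' where "a \<noteq> a'" "A = {a, a'}" "B = {b}"
  | (split) b' where "b \<noteq> b'" "A = {a}" "B = {b, b'}"
  using assms(1)
proof (cases rule: kh_localE)
  case (merge a1 a2 b0)
  then show ?thesis using assms(2,3) that(1)[of a2] that(1)[of a1] by (auto simp: insert_commute)
next
  case (split a0 b1 b2)
  then show ?thesis using assms(2,3) that(2)[of b2] that(2)[of b1] by (auto simp: insert_commute)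
qed

text \<open>Multiplication by X on a marked circle lowers its label from v+ to v-; the following
  lemmas say that this commutes with the edge maps, whether the marked circle takes part in the
  merge or split (and is then replaced by the circle a2 containing the mark) or not.\<close>

lemma kh_local_unmark_changed:
  assumes aA: "a \<in> A" and a2B: "a2 \<in> B" and aI: "a \<notin> I" "a \<notin> B" and a2I: "a2 \<notin> I" "a2 \<notin> A"
    and aP: "a \<in> P"
  shows "kh_local I A B (P - {a}) Q \<longleftrightarrow> (a2 \<notin> Q \<and> kh_local I A B P (insert a2 Q))"
proof -
  have I: "(\<forall>C\<in>I. C \<in> P - {a} \<longleftrightarrow> C \<in> Q) \<longleftrightarrow> (\<forall>C\<in>I. C \<in> P \<longleftrightarrow> C \<in> insert a2 Q)"
    using aI a2I by auto
  have shape: "(\<exists>a'. a \<noteq> a' \<and> A = {a, a'} \<and> B = {a2}) \<or> (\<exists>b'. a2 \<noteq> b' \<and> A = {a} \<and> B = {a2, b'})"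
    if "kh_local I A B P' Q'" for P' Q'
    using that aA a2B by (cases rule: kh_local_shapeE) blast+
  show ?thesis
  proof
    assume k: "kh_local I A B (P - {a}) Q"
    from shape[OF k] show "a2 \<notin> Q \<and> kh_local I A B P (insert a2 Q)"
    proof (elim disjE exE conjE)
      fix a' assume e: "a \<noteq> a'" "A = {a, a'}" "B = {a2}"
      from k show ?thesis unfolding e kh_local_merge[OF e(1)] I using aP e(1) by auto
    next
      fix b' assume e: "a2 \<noteq> b'" "A = {a}" "B = {a2, b'}"
      from k show ?thesis unfolding e kh_local_split[OF e(1)] I using aP e(1) by auto
    qed
  next
    assume "a2 \<notin> Q \<and> kh_local I A B P (insert a2 Q)"
    then have nq: "a2 \<notin> Q" and k: "kh_local I A B P (insert a2 Q)" by auto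
    from shape[OF k] show "kh_local I A B (P - {a}) Q"
    proof (elim disjE exE conjE)
      fix a' assume e: "a \<noteq> a'" "A = {a, a'}" "B = {a2}"
      from k show ?thesis unfolding e kh_local_merge[OF e(1)] I using aP e(1) nq by auto
    next
      fix b' assume e: "a2 \<noteq> b'" "A = {a}" "B = {a2, b'}"
      from k show ?thesis unfolding e kh_local_split[OF e(1)] I using aP e(1) nq by auto
    qed
  qed
qed

lemma kh_local_unmarked_changed:
  assumes aA: "a \<in> A" and a2B: "a2 \<in> B" and aP: "a \<notin> P" and k: "kh_local I A B P Q"
  shows "a2 \<notin> Q"
  using k aA a2B
proof (cases rule: kh_local_shapeE)
  case (merge a')
  from k show ?thesis unfolding merge(2,3) kh_local_merge[OF merge(1)] using aP by auto
next
  case (split b')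
  from k show ?thesis unfolding split(2,3) kh_local_split[OF split(1)] using aP by auto
qed

lemma kh_local_unmark_common:
  assumes aI: "a \<in> I" and aA: "a \<notin> A" "a \<notin> B" and aP: "a \<in> P"
  shows "kh_local I A B (P - {a}) Q \<longleftrightarrow> (a \<notin> Q \<and> kh_local I A B P (insert a Q))"
proof -
  have I: "I = insert a (I - {a})" using aI by auto
  have c1: "kh_local (I - {a}) A B (P - {a}) Q = kh_local (I - {a}) A B P Q"
    by (rule kh_local_cong) (use aA in auto)
  have c2: "kh_local (I - {a}) A B P (insert a Q) = kh_local (I - {a}) A B P Q"
    by (rule kh_local_cong) (use aA in auto)
  show ?thesis by (subst (1 2) I) (simp only: kh_local_insert_common c1 c2, use aP in simp)
qed

lemma kh_local_unmarked_common:
  assumes "a \<in> I" "a \<notin> P" "kh_local I A B P Q"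
  shows "a \<notin> Q"
  using assms unfolding kh_local_def by blast

lemma kh_coeff_eq_on: "kh_coeff n w x y = kh_coeff_on (circles n w (fst x)) (circles n w (fst y)) (snd x) (snd y)"
  unfolding kh_coeff_def kh_coeff_on_def kh_local_def Let_def ..

definition kgr_on :: "seg set set \<Rightarrow> seg set set \<Rightarrow> int" where
  "kgr_on Cr P = int (card {C \<in> P. nontrivial C}) - int (card {C \<in> Cr - P. nontrivial C})"

lemma kgr_eq_on: "kgr n w x = kgr_on (circles n w (fst x)) (snd x)"
  unfolding kgr_def kgr_on_def ..

lemma kgr_on_image:
  assumes inj: "inj_on h U" and U: "Cr \<subseteq> U" "P \<subseteq> Cr" and nt: "\<And>C. C \<in> U \<Longrightarrow> nontrivial (h C) = nontrivial C"
  shows "kgr_on (h ` Cr) (h ` P) = kgr_on Cr P"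
proof -
  have "{C \<in> h ` P. nontrivial C} = h ` {C \<in> P. nontrivial C}" using nt U by auto
  moreover have "card (h ` {C \<in> P. nontrivial C}) = card {C \<in> P. nontrivial C}"
    by (rule card_image, rule inj_on_subset[OF inj]) (use U in auto)
  moreover have "h ` Cr - h ` P = h ` (Cr - P)"
    by (rule inj_on_image_set_diff[OF inj, symmetric]) (use U in blast)+
  moreover have "{C \<in> h ` (Cr - P). nontrivial C} = h ` {C \<in> Cr - P. nontrivial C}" using nt U by auto
  moreover have "card (h ` {C \<in> Cr - P. nontrivial C}) = card {C \<in> Cr - P. nontrivial C}"
    by (rule card_image, rule inj_on_subset[OF inj]) (use U in auto)
  ultimately show ?thesis unfolding kgr_on_def by simp
qed

lemma kgr_on_insert:
  assumes "finite Cr" "X \<notin> Cr" "nontrivial X" "P \<subseteq> insert X Cr"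
  shows "kgr_on (insert X Cr) P = kgr_on Cr (P - {X}) + (if X \<in> P then 1 else -1)"
proof (cases "X \<in> P")
  case True
  have "{C \<in> P. nontrivial C} = insert X {C \<in> P - {X}. nontrivial C}" using True assms by auto
  moreover have "finite {C \<in> P - {X}. nontrivial C}" using assms(1,4) by (auto intro: finite_subset)
  moreover have "insert X Cr - P = Cr - (P - {X})" using True assms by auto
  ultimately show ?thesis unfolding kgr_on_def using True by simp
next
  case False
  have "{C \<in> insert X Cr - P. nontrivial C} = insert X {C \<in> Cr - (P - {X}). nontrivial C}" using False assms by auto
  moreover have "finite {C \<in> Cr - (P - {X}). nontrivial C}" using assms(1) by auto
  moreover have "P - {X} = P" using False by auto
  ultimately show ?thesis unfolding kgr_on_def using False assms(2) by simp
qed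

lemma kgr_on_remove:
  assumes "finite Cr" "C0 \<in> P" "P \<subseteq> Cr"
  shows "kgr_on Cr (P - {C0}) = kgr_on Cr P - (if nontrivial C0 then 2 else 0)"
proof (cases "nontrivial C0")
  case True
  have "{C \<in> P. nontrivial C} = insert C0 {C \<in> P - {C0}. nontrivial C}" using True assms by auto
  moreover have "finite {C \<in> P - {C0}. nontrivial C}" using assms by (auto intro: finite_subset)
  moreover have "{C \<in> Cr - (P - {C0}). nontrivial C} = insert C0 {C \<in> Cr - P. nontrivial C}" using True assms by auto
  moreover have "finite {C \<in> Cr - P. nontrivial C}" using assms by auto
  moreover have "C0 \<notin> {C \<in> Cr - P. nontrivial C}" "C0 \<notin> {C \<in> P - {C0}. nontrivial C}" using assms by auto
  ultimately show ?thesis unfolding kgr_on_def using True by (simp only: card_insert_disjoint) simp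
next
  case False
  have "{C \<in> P - {C0}. nontrivial C} = {C \<in> P. nontrivial C}" using False by auto
  moreover have "{C \<in> Cr - (P - {C0}). nontrivial C} = {C \<in> Cr - P. nontrivial C}" using False by auto
  ultimately show ?thesis unfolding kgr_on_def using False by simp
qed

lemma kd_resolution_mono: "z \<in> kd n w x \<Longrightarrow> fst x \<subseteq> fst z"
  unfolding kd_def by auto

lemma kd_in_gens: "z \<in> kd n w x \<Longrightarrow> z \<in> gens n w"
  unfolding kd_def by auto

lemma kd_chain_subset_gens: "kd_chain n w X \<subseteq> gens n w"
proof
  fix z assume "z \<in> kd_chain n w X"
  then have "odd (card {x \<in> X. z \<in> kd n w x})" by (simp add: kd_chain_def)
  then have "{x \<in> X. z \<in> kd n w x} \<noteq> {}" by (metis card.empty even_zero)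
  then show "z \<in> gens n w" using kd_in_gens by blast
qed

lemma psi_in_gens: "psi w \<in> gens n w" by (auto simp: psi_def gens_def)

lemma mem_kd_chain: "z \<in> kd_chain n w X \<longleftrightarrow> odd (card {x \<in> X. z \<in> kd n w x})"
  by (simp add: kd_chain_def)

section \<open>The invariant \<kappa>\<close>

lemma Least_int_bounded:
  fixes P :: "int \<Rightarrow> bool"
  assumes Pk: "P k" and lb: "\<And>i. P i \<Longrightarrow> b \<le> i"
  shows "P (LEAST i. P i) \<and> (LEAST i. P i) \<le> k"
proof -
  define f where "f t = P (b + int t)" for t :: nat
  have fk: "f (nat (k - b))" using Pk lb[OF Pk] by (simp add: f_def)
  define m where "m = b + int (LEAST t. f t)"
  have Pm: "P m" using LeastI[of f, OF fk] by (simp add: m_def f_def)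
  have mle: "m \<le> y" if "P y" for y
  proof -
    have "f (nat (y - b))" using that lb[OF that] by (simp add: f_def)
    then have "(LEAST t. f t) \<le> nat (y - b)" by (rule Least_le)
    then show ?thesis using lb[OF that] by (simp add: m_def)
  qed
  have "(LEAST i. P i) = m" by (rule Least_equality[of P m, OF Pm mle])
  then show ?thesis using Pm mle[OF Pk] by simp
qed

lemma kgr_lower_bound: "x \<in> gens n w \<Longrightarrow> - int (card (segs n w)) \<le> kgr n w x"
proof -
  assume x: "x \<in> gens n w"
  have "card {C \<in> circles n w (fst x) - snd x. nontrivial C} \<le> card (circles n w (fst x))"
    by (rule card_mono[OF finite_circles]) auto
  also have "card (circles n w (fst x)) \<le> card (segs n w)"
  proof -
    have "circles n w (fst x) = (\<lambda>y. component (edges n w (fst x)) y) ` segs n w" unfolding circles_eq_components by auto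
    then show ?thesis by (simp add: card_image_le finite_segs)
  qed
  finally show ?thesis unfolding kgr_def by simp
qed

lemma boundary_level_lower_bound:
  assumes "X \<in> filt n w i" "kd_chain n w X = {psi w}"
  shows "- int (card (segs n w)) \<le> i"
proof -
  have "X \<noteq> {}" using assms(2) by (auto simp: kd_chain_def)
  then obtain x where "x \<in> X" by blast
  then have "x \<in> gens n w" "kgr n w x \<le> i" using assms(1) by (auto simp: filt_def)
  then show ?thesis using kgr_lower_bound[of x n w] by simp
qed

lemma kappa_le:
  assumes "X \<in> filt n w i" "kd_chain n w X = {psi w}"
  shows "kappa n w \<le> ereal (real_of_int (int n + i))"
proof -
  let ?P = "\<lambda>i. \<exists>X \<in> filt n w i. kd_chain n w X = {psi w}"
  have "?P i" using assms by blast
  have "(LEAST i. ?P i) \<le> i"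
    using Least_int_bounded[of ?P i "- int (card (segs n w))"] \<open>?P i\<close> boundary_level_lower_bound by blast
  then show ?thesis unfolding kappa_def using \<open>?P i\<close> by auto
qed

lemma kappa_least:
  assumes "\<exists>i. \<exists>X \<in> filt n w i. kd_chain n w X = {psi w}"
  obtains i X where "X \<in> filt n w i" "kd_chain n w X = {psi w}" "kappa n w = ereal (real_of_int (int n + i))"
proof -
  let ?P = "\<lambda>i. \<exists>X \<in> filt n w i. kd_chain n w X = {psi w}"
  obtain k where "?P k" using assms by blast
  then have "?P (LEAST i. ?P i)"
    using Least_int_bounded[of ?P k "- int (card (segs n w))"] boundary_level_lower_bound by blast
  then obtain X where "X \<in> filt n w (LEAST i. ?P i)" "kd_chain n w X = {psi w}" by blast
  moreover have "kappa n w = ereal (real_of_int (int n + (LEAST i. ?P i)))"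
    unfolding kappa_def using assms by simp
  ultimately show ?thesis by (rule that)
qed

lemma kappa_le_shift:
  assumes "\<And>i X. X \<in> filt n w i \<Longrightarrow> kd_chain n w X = {psi w} \<Longrightarrow>
    \<exists>Y \<in> filt m v (i + c). kd_chain m v Y = {psi v}"
  shows "kappa m v \<le> kappa n w + ereal (real_of_int (int m - int n + c))"
proof (cases "\<exists>i. \<exists>X \<in> filt n w i. kd_chain n w X = {psi w}")
  case True
  then obtain i X where X: "X \<in> filt n w i" "kd_chain n w X = {psi w}"
    and k: "kappa n w = ereal (real_of_int (int n + i))"
    by (rule kappa_least)
  obtain Y where Y: "Y \<in> filt m v (i + c)" "kd_chain m v Y = {psi v}" using assms[OF X] by blast
  have "kappa m v \<le> ereal (real_of_int (int m + (i + c)))" by (rule kappa_le[OF Y])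
  also have "\<dots> = kappa n w + ereal (real_of_int (int m - int n + c))" by (simp add: k)
  finally show ?thesis .
next
  case False
  then have "kappa n w = \<infinity>" by (simp add: kappa_def)
  then show ?thesis by simp
qed

section \<open>The stabilized diagram\<close>

text \<open>The map collapse b sends segments of w' to those of w: for b = False the
  new strand is collapsed to the extra point (0, n+1), which forms a circle of its own, and for
  b = True it is collapsed onto (q, n), so the new strand joins the circle through (q, n).\<close>

locale stabilization =
  fixes n :: nat and w :: bword and q :: nat
  assumes bw: "braid_word n w" and qL: "q \<le> length w"
begin

definition w' :: bword where "w' = take q w @ [(n,True)] @ drop q w"
definition idx_shift :: "nat \<Rightarrow> nat" where "idx_shift j = (if j < q then j else Suc j)"
definition idx_unshift :: "nat \<Rightarrow> nat" where "idx_unshift j = (if j \<le> q then j else j - 1)"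
definition res_lift :: "nat set \<Rightarrow> bool \<Rightarrow> nat set" where
  "res_lift r b = idx_shift ` r \<union> (if b then {q} else {})"
definition collapse :: "bool \<Rightarrow> seg \<Rightarrow> seg" where
  "collapse b s = (if snd s = Suc n then (if b then (q,n) else (0,Suc n)) else (idx_unshift (fst s), snd s))"
definition segs' :: "seg set" where "segs' = segs (Suc n) w'"
definition collapse_pre :: "bool \<Rightarrow> seg set \<Rightarrow> seg set" where
  "collapse_pre b C = {s \<in> segs'. collapse b s \<in> C}"

lemma n_pos: "1 \<le> n" using bw by (simp add: braid_word_def)
lemma letters_w: "letters_in_range n w" using bw by (rule braid_word_letters_in_range)

lemma length_w': "length w' = Suc (length w)"
  using qL by (simp add: w'_def)

lemma nth_w'_shift: "j < length w \<Longrightarrow> w' ! idx_shift j = w ! j"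
  using qL by (auto simp: w'_def idx_shift_def nth_append min_def)

lemma nth_w'_new: "w' ! q = (n, True)"
  using qL by (auto simp: w'_def nth_append min_def)

lemma index_w'_cases: "j' < Suc (length w) \<Longrightarrow> j' = q \<or> (\<exists>j < length w. j' = idx_shift j)"
proof -
  assume a: "j' < Suc (length w)"
  show ?thesis
  proof (cases "j' < q")
    case True then have "j' < length w \<and> j' = idx_shift j'" using qL by (simp add: idx_shift_def)
    then show ?thesis by blast
  next
    case False
    show ?thesis
    proof (cases "j' = q")
      case False': False
      with False a have "j' - 1 < length w \<and> j' = idx_shift (j' - 1)" by (auto simp: idx_shift_def)
      then show ?thesis by blast
    qed simp
  qed
qed

lemma idx_shift_inj: "idx_shift i = idx_shift j \<longleftrightarrow> i = j" by (auto simp: idx_shift_def)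
lemma idx_shift_neq_new: "idx_shift j \<noteq> q" by (auto simp: idx_shift_def)
lemma new_neq_idx_shift: "q \<noteq> idx_shift j" by (auto simp: idx_shift_def)
lemma idx_unshift_shift: "idx_unshift (idx_shift j) = j" by (auto simp: idx_shift_def idx_unshift_def)
lemma idx_unshift_Suc_shift: "idx_unshift (Suc (idx_shift j)) = Suc j" by (auto simp: idx_shift_def idx_unshift_def)
lemma idx_shift_less: "j < length w \<Longrightarrow> idx_shift j < Suc (length w)" using qL by (auto simp: idx_shift_def)

lemma letters_w': "letters_in_range (Suc n) w'"
  unfolding letters_in_range_def length_w'
proof (intro allI impI)
  fix j' assume "j' < Suc (length w)"
  then consider "j' = q" | j where "j < length w" "j' = idx_shift j" using index_w'_cases by blast
  then show "1 \<le> fst (w' ! j') \<and> fst (w' ! j') < Suc n"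
  proof cases
    case 1 then show ?thesis using n_pos by (simp add: nth_w'_new)
  next
    case 2 then show ?thesis using letters_w by (auto simp: nth_w'_shift letters_in_range_def)
  qed
qed

lemma braidlike_smoothed_shift: "j < length w \<Longrightarrow> braidlike_smoothed w' (res_lift r b) (idx_shift j) = braidlike_smoothed w r j"
  by (auto simp: braidlike_smoothed_def res_lift_def nth_w'_shift idx_shift_inj idx_shift_neq_new)

lemma braidlike_smoothed_new: "braidlike_smoothed w' (res_lift r b) q \<longleftrightarrow> \<not> b"
  by (auto simp: braidlike_smoothed_def res_lift_def nth_w'_new idx_shift_neq_new new_neq_idx_shift)

lemma edges_w'_segs': "edges (Suc n) w' r' \<subseteq> segs' \<times> segs'"
  unfolding segs'_def by (rule edges_segs[OF letters_w'])

lemma collapse_low: "p \<noteq> Suc n \<Longrightarrow> collapse b (j,p) = (idx_unshift j, p)" by (simp add: collapse_def)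
lemma idx_unshift_new: "idx_unshift q = q" and idx_unshift_Suc_new: "idx_unshift (Suc q) = q" and idx_unshift_end: "idx_unshift (Suc (length w)) = length w"
  using qL by (auto simp: idx_unshift_def)

lemma idx_unshift_0[simp]: "idx_unshift 0 = 0" by (simp add: idx_unshift_def)

lemma letter_bounds: "j < length w \<Longrightarrow> fst (w!j) < n" "j < length w \<Longrightarrow> 1 \<le> fst (w!j)"
  using letters_w by (auto simp: letters_in_range_def)

lemma collapse_edge:
  assumes "(a,c) \<in> edges (Suc n) w' (res_lift r b)"
  shows "collapse b a = collapse b c \<or> (collapse b a, collapse b c) \<in> edges n w r \<union> (edges n w r)\<inverse>"
  using assms
proof (cases rule: edgesE)
  case (closure p)
  show ?thesis
  proof (cases "p = Suc n")
    case True then show ?thesis using closure by (simp add: collapse_def)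
  next
    case False
    then have "p \<in> {1..n}" using closure by auto
    then have "((length w, p), (0,p)) \<in> edges n w r" by (rule edges_closure)
    then show ?thesis using closure False by (simp add: collapse_low length_w' idx_unshift_end)
  qed
next
  case (passing j' p)
  from passing(1) length_w' consider "j' = q" | j where "j < length w" "j' = idx_shift j" using index_w'_cases by auto
  then show ?thesis
  proof cases
    case 1
    then have "p \<noteq> Suc n" using passing by (simp add: nth_w'_new)
    then show ?thesis using passing 1 by (simp add: collapse_low idx_unshift_new idx_unshift_Suc_new)
  next
    case 2
    show ?thesis
    proof (cases "p = Suc n")
      case True then show ?thesis using passing by (simp add: collapse_def)
    next
      case False
      then have "((j,p),(Suc j,p)) \<in> edges n w r"
        using passing 2 by (intro edges_passing) (auto simp: nth_w'_shift)
      then show ?thesis using passing 2 False by (simp add: collapse_low idx_unshift_shift idx_unshift_Suc_shift)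
    qed
  qed
next
  case (smooth j' p)
  from smooth(1) length_w' consider "j' = q" | j where "j < length w" "j' = idx_shift j" using index_w'_cases by auto
  then show ?thesis
  proof cases
    case 1
    then have "p = n \<or> p = Suc n" using smooth by (simp add: nth_w'_new)
    then show ?thesis using smooth 1 n_pos by (auto simp: collapse_def idx_unshift_new idx_unshift_Suc_new)
  next
    case 2
    have pn: "p \<noteq> Suc n" using smooth 2 letter_bounds[of j] by (auto simp: nth_w'_shift)
    have "((j,p),(Suc j,p)) \<in> edges n w r"
      using smooth 2 by (intro edges_smooth) (auto simp: nth_w'_shift braidlike_smoothed_shift)
    then show ?thesis using smooth 2 pn by (simp add: collapse_low idx_unshift_shift idx_unshift_Suc_shift)
  qed
next
  case (turn_low j')
  from turn_low(1) length_w' consider "j' = q" | j where "j < length w" "j' = idx_shift j" using index_w'_cases by auto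
  then show ?thesis
  proof cases
    case 1
    then have "b" using turn_low braidlike_smoothed_new by auto
    then show ?thesis using turn_low 1 by (simp add: collapse_def nth_w'_new idx_unshift_new)
  next
    case 2
    have pn: "fst (w!j) \<noteq> Suc n" "Suc (fst (w!j)) \<noteq> Suc n" using 2 letter_bounds[of j] by auto
    have "((j,fst (w!j)),(j,Suc (fst (w!j)))) \<in> edges n w r"
      using turn_low 2 by (intro edges_turn_low) (auto simp: braidlike_smoothed_shift)
    then show ?thesis using turn_low 2 pn by (simp add: collapse_low idx_unshift_shift nth_w'_shift)
  qed
next
  case (turn_high j')
  from turn_high(1) length_w' consider "j' = q" | j where "j < length w" "j' = idx_shift j" using index_w'_cases by auto
  then show ?thesis
  proof cases
    case 1
    then have "b" using turn_high braidlike_smoothed_new by auto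
    then show ?thesis using turn_high 1 by (simp add: collapse_def nth_w'_new idx_unshift_Suc_new)
  next
    case 2
    have pn: "fst (w!j) \<noteq> Suc n" "Suc (fst (w!j)) \<noteq> Suc n" using 2 letter_bounds[of j] by auto
    have "((Suc j,fst (w!j)),(Suc j,Suc (fst (w!j)))) \<in> edges n w r"
      using turn_high 2 by (intro edges_turn_high) (auto simp: braidlike_smoothed_shift)
    then show ?thesis using turn_high 2 pn by (simp add: collapse_low idx_unshift_Suc_shift nth_w'_shift)
  qed
qed

lemma conn_lift_edge:
  assumes "(a,c) \<in> edges (Suc n) w' (res_lift r b)" "collapse b a = u" "collapse b c = v"
  shows "\<exists>a\<in>segs'. \<exists>c\<in>segs'. collapse b a = u \<and> collapse b c = v \<and> (a,c) \<in> conn (edges (Suc n) w' (res_lift r b))"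
proof -
  have "(a,c) \<in> segs' \<times> segs'" using assms(1) edges_w'_segs' by blast
  then show ?thesis using assms conn_edge[OF assms(1)] by blast
qed

lemma collapse_edge_lift:
  assumes "(u,v) \<in> edges n w r"
  shows "\<exists>a\<in>segs'. \<exists>c\<in>segs'. collapse b a = u \<and> collapse b c = v \<and> (a,c) \<in> conn (edges (Suc n) w' (res_lift r b))"
  using assms
proof (cases rule: edgesE)
  case (closure p)
  have "((length w', p),(0,p)) \<in> edges (Suc n) w' (res_lift r b)" using closure by (intro edges_closure) auto
  then show ?thesis using closure by (intro conn_lift_edge) (auto simp: length_w' collapse_low idx_unshift_end)
next
  case (passing j p)
  have "((idx_shift j, p),(Suc (idx_shift j),p)) \<in> edges (Suc n) w' (res_lift r b)"
    using passing by (intro edges_passing) (auto simp: length_w' idx_shift_less nth_w'_shift)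
  then show ?thesis using passing by (intro conn_lift_edge) (auto simp: collapse_low idx_unshift_shift idx_unshift_Suc_shift)
next
  case (smooth j p)
  have pn: "p \<noteq> Suc n" using smooth letter_bounds[of j] by auto
  have "((idx_shift j, p),(Suc (idx_shift j),p)) \<in> edges (Suc n) w' (res_lift r b)"
    using smooth by (intro edges_smooth) (auto simp: length_w' idx_shift_less nth_w'_shift braidlike_smoothed_shift)
  then show ?thesis using smooth pn letter_bounds[of j] by (intro conn_lift_edge) (auto simp: collapse_low idx_unshift_shift idx_unshift_Suc_shift)
next
  case (turn_low j)
  have pn: "fst (w!j) \<noteq> Suc n" "Suc (fst (w!j)) \<noteq> Suc n" using turn_low letter_bounds[of j] by auto
  have "((idx_shift j, fst (w'!idx_shift j)),(idx_shift j, Suc (fst (w'!idx_shift j)))) \<in> edges (Suc n) w' (res_lift r b)"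
    using turn_low by (intro edges_turn_low) (auto simp: length_w' idx_shift_less braidlike_smoothed_shift)
  then show ?thesis using turn_low pn by (intro conn_lift_edge) (auto simp: collapse_low idx_unshift_shift nth_w'_shift)
next
  case (turn_high j)
  have pn: "fst (w!j) \<noteq> Suc n" "Suc (fst (w!j)) \<noteq> Suc n" using turn_high letter_bounds[of j] by auto
  have "((Suc (idx_shift j), fst (w'!idx_shift j)),(Suc (idx_shift j), Suc (fst (w'!idx_shift j)))) \<in> edges (Suc n) w' (res_lift r b)"
    using turn_high by (intro edges_turn_high) (auto simp: length_w' idx_shift_less braidlike_smoothed_shift)
  then show ?thesis using turn_high pn by (intro conn_lift_edge) (auto simp: collapse_low idx_unshift_Suc_shift nth_w'_shift)
qed

abbreviation "E' r b \<equiv> edges (Suc n) w' (res_lift r b)"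

lemma top_strand_edge: "j < Suc (length w) \<Longrightarrow> j \<noteq> q \<Longrightarrow> ((j,Suc n),(Suc j,Suc n)) \<in> E' r b"
proof -
  assume a: "j < Suc (length w)" "j \<noteq> q"
  then obtain j0 where j0: "j0 < length w" "j = idx_shift j0" using index_w'_cases by blast
  show ?thesis using j0 letter_bounds[of j0] n_pos by (intro edges_passing) (auto simp: length_w' idx_shift_less nth_w'_shift)
qed

lemma top_strand_conn_le: "j \<le> q \<Longrightarrow> ((j,Suc n),(q,Suc n)) \<in> conn (E' r b)"
  by (rule conn_horizontal_run) (use qL in \<open>auto intro!: top_strand_edge\<close>)

lemma top_strand_conn_gt: "q < j \<Longrightarrow> j \<le> Suc (length w) \<Longrightarrow> ((j,Suc n),(q,Suc n)) \<in> conn (E' r b)"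
proof -
  assume a: "q < j" "j \<le> Suc (length w)"
  have "((j,Suc n),(Suc (length w),Suc n)) \<in> conn (E' r b)"
    by (rule conn_horizontal_run) (use a in \<open>auto intro!: top_strand_edge\<close>)
  moreover have "((Suc (length w),Suc n),(0,Suc n)) \<in> conn (E' r b)"
    by (rule conn_edge, subst length_w'[symmetric], rule edges_closure) auto
  moreover have "((0,Suc n),(q,Suc n)) \<in> conn (E' r b)" by (rule top_strand_conn_le) simp
  ultimately show ?thesis using conn_trans by metis
qed

lemma top_strand_conn: "j \<le> Suc (length w) \<Longrightarrow> ((j,Suc n),(q,Suc n)) \<in> conn (E' r b)"
  using top_strand_conn_le top_strand_conn_gt by (cases "j \<le> q") auto

definition canon :: "bool \<Rightarrow> seg \<Rightarrow> seg" where
  "canon b s = (if snd s = Suc n then (q, if b then n else Suc n) else if fst s = Suc q then (q, snd s) else s)"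

lemma new_turn_low: "b \<Longrightarrow> ((q,n),(q,Suc n)) \<in> E' r b"
  using edges_turn_low[of q w' "res_lift r b" "Suc n"] by (simp add: length_w' qL less_Suc_eq_le braidlike_smoothed_new nth_w'_new)
lemma new_turn_high: "b \<Longrightarrow> ((Suc q,n),(Suc q,Suc n)) \<in> E' r b"
  using edges_turn_high[of q w' "res_lift r b" "Suc n"] by (simp add: length_w' qL less_Suc_eq_le braidlike_smoothed_new nth_w'_new)
lemma new_smooth: "\<not> b \<Longrightarrow> p = n \<or> p = Suc n \<Longrightarrow> ((q,p),(Suc q,p)) \<in> E' r b"
  using edges_smooth[of q w' "res_lift r b" p "Suc n"] by (simp add: length_w' qL less_Suc_eq_le braidlike_smoothed_new nth_w'_new)
lemma new_passing: "1 \<le> p \<Longrightarrow> p < n \<Longrightarrow> ((q,p),(Suc q,p)) \<in> E' r b"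
  using edges_passing[of q w' p "Suc n" "res_lift r b"] by (simp add: length_w' qL less_Suc_eq_le nth_w'_new)

lemma new_crossing_fibre_conn: "((Suc q, p),(q,p)) \<in> conn (E' r b)" if "1 \<le> p" "p \<le> n"
proof (cases "p < n")
  case True then show ?thesis using new_passing[OF that(1) True] conn_edge_rev by metis
next
  case False then have p: "p = n" using that by auto
  show ?thesis
  proof (cases b)
    case False then show ?thesis using new_smooth[of b n] p conn_edge_rev by metis
  next
    case True
    have "((Suc q,n),(Suc q,Suc n)) \<in> conn (E' r b)" using new_turn_high[OF True] conn_edge by metis
    moreover have "((Suc q,Suc n),(q,Suc n)) \<in> conn (E' r b)" using top_strand_conn[of "Suc q"] qL by auto
    moreover have "((q,Suc n),(q,n)) \<in> conn (E' r b)" using new_turn_low[OF True] conn_edge_rev by metis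
    ultimately show ?thesis using p conn_trans by metis
  qed
qed

lemma conn_canon: "a \<in> segs' \<Longrightarrow> (a, canon b a) \<in> conn (E' r b)"
proof -
  assume "a \<in> segs'"
  then obtain j p where a: "a = (j,p)" "j \<le> Suc (length w)" "1 \<le> p" "p \<le> Suc n"
    by (auto simp: segs'_def segs_def length_w')
  show ?thesis
  proof (cases "p = Suc n")
    case True
    have "((j,Suc n),(q,Suc n)) \<in> conn (E' r b)" using top_strand_conn a by auto
    moreover have "((q,Suc n),(q,n)) \<in> conn (E' r b)" if b using new_turn_low[OF that] conn_edge_rev by metis
    ultimately show ?thesis using a True conn_trans by (cases b) (auto simp: canon_def)
  next
    case False
    then show ?thesis using a new_crossing_fibre_conn[of p] by (auto simp: canon_def)
  qed
qed

lemma canon_eq: assumes "a \<in> segs'" "c \<in> segs'" "collapse b a = collapse b c" shows "canon b a = canon b c"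
proof -
  obtain j p where a: "a = (j,p)" "j \<le> Suc (length w)" "1 \<le> p" "p \<le> Suc n"
    using assms(1) by (auto simp: segs'_def segs_def length_w')
  obtain j' p' where c: "c = (j',p')" "j' \<le> Suc (length w)" "1 \<le> p'" "p' \<le> Suc n"
    using assms(2) by (auto simp: segs'_def segs_def length_w')
  have gg: "idx_unshift x = idx_unshift y \<Longrightarrow> (if x = Suc q then q else x) = (if y = Suc q then q else y)" for x y
    by (auto simp: idx_unshift_def split: if_splits)
  have gq: "idx_unshift x = q \<Longrightarrow> x = q \<or> x = Suc q" for x by (auto simp: idx_unshift_def split: if_splits)
  show ?thesis
    using assms(3) a c gg[of j j'] gq[of j] gq[of j']
    by (auto simp: collapse_def canon_def split: if_splits)
qed

lemma collapse_fibre_conn: "a \<in> segs' \<Longrightarrow> c \<in> segs' \<Longrightarrow> collapse b a = collapse b c \<Longrightarrow> (a,c) \<in> conn (E' r b)"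
  using conn_canon[of a b r] conn_canon[of c b r] canon_eq[of a c b] conn_trans conn_sym by metis

lemma collapse_image: "collapse b ` segs' = segs n w \<union> (if b then {} else {(0,Suc n)})"
proof
  show "collapse b ` segs' \<subseteq> segs n w \<union> (if b then {} else {(0,Suc n)})"
    using qL n_pos by (auto simp: segs'_def segs_def length_w' collapse_def idx_unshift_def split: if_splits)
next
  show "segs n w \<union> (if b then {} else {(0,Suc n)}) \<subseteq> collapse b ` segs'"
  proof
    fix u assume u: "u \<in> segs n w \<union> (if b then {} else {(0,Suc n)})"
    show "u \<in> collapse b ` segs'"
    proof (cases "u = (0, Suc n) \<and> \<not> b")
      case True
      then show ?thesis by (intro image_eqI[of _ _ "(0,Suc n)"]) (auto simp: collapse_def segs'_def segs_def)
    next
      case False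
      then obtain j p where jp: "u = (j,p)" "j \<le> length w" "1 \<le> p" "p \<le> n"
        using u by (auto simp: segs_def split: if_splits)
      show ?thesis
        by (intro image_eqI[of _ _ "(if j \<le> q then j else Suc j, p)"])
           (use jp in \<open>auto simp: collapse_def segs'_def segs_def length_w' idx_unshift_def\<close>)
    qed
  qed
qed

lemma circles_w'_collapse: "circles (Suc n) w' (res_lift r b) = collapse_pre b ` (circles n w r \<union> (if b then {} else {{(0,Suc n)}}))"
proof -
  have "circles (Suc n) w' (res_lift r b) = collapse_pre b ` {component (edges n w r) u | u. u \<in> collapse b ` segs'}"
    unfolding circles_eq_components collapse_pre_def segs'_def[symmetric]
    by (rule graph_collapse.components_eq_preimages[OF graph_collapse.intro[OF edges_w'_segs' collapse_edge collapse_edge_lift collapse_fibre_conn]])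
  also have "{component (edges n w r) u | u. u \<in> collapse b ` segs'} = circles n w r \<union> (if b then {} else {{(0,Suc n)}})"
  proof -
    have iso: "component (edges n w r) (0, Suc n) = {(0,Suc n)}"
      using edges_segs[OF letters_w, of r] by (intro component_isolated) (auto simp: segs_def)
    show ?thesis unfolding collapse_image circles_eq_components using iso by auto
  qed
  finally show ?thesis .
qed

definition top_seg :: seg where "top_seg = (0, Suc n)"
definition attach_top :: "seg set \<Rightarrow> seg set" where "attach_top C = (if (q,n) \<in> C then insert top_seg C else C)"
text \<open>circles' r b are the circles of the resolution res_lift r b of w' after collapse False,
  which sends the new strand to the point top_seg.\<close>

definition circles' :: "nat set \<Rightarrow> bool \<Rightarrow> seg set set" where
  "circles' r b = (if b then attach_top ` circles n w r else insert {top_seg} (circles n w r))"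
definition marked :: "nat set \<Rightarrow> seg set" where "marked r = component (edges n w r) (q,n)"
definition collapse_dom :: "seg set set" where "collapse_dom = {C. C \<subseteq> segs n w \<union> {top_seg}}"

lemma top_seg_notin_segs: "top_seg \<notin> segs n w" by (simp add: top_seg_def segs_def)
lemma marked_seg_in_segs: "(q,n) \<in> segs n w" using qL n_pos by (simp add: segs_def)
lemma top_seg_neq_marked_seg: "top_seg \<noteq> (q,n)" by (simp add: top_seg_def)

lemma circle_subset_segs_w: "C \<in> circles n w r \<Longrightarrow> C \<subseteq> segs n w" using circle_subset_segs[OF letters_w] .

lemma marked_circle: "marked r \<in> circles n w r" "(q,n) \<in> marked r"
  unfolding marked_def using component_in_circles[OF marked_seg_in_segs] component_self by auto

lemma top_seg_notin_circle: "C \<in> circles n w r \<Longrightarrow> top_seg \<notin> C" using circle_subset_segs_w top_seg_notin_segs by blast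

lemma top_circle_notin_circles: "{top_seg} \<notin> circles n w r" using top_seg_notin_circle by blast

lemma attach_top_other: "C \<in> circles n w r \<Longrightarrow> C \<noteq> marked r \<Longrightarrow> attach_top C = C"
  unfolding attach_top_def using circles_disjoint marked_circle by metis

lemma attach_top_marked: "attach_top (marked r) = insert top_seg (marked r)"
  unfolding attach_top_def using marked_circle by simp

lemma circles'_True: "circles' r True = insert (insert top_seg (marked r)) (circles n w r - {marked r})"
proof -
  have "attach_top ` circles n w r = attach_top ` (insert (marked r) (circles n w r - {marked r}))" using marked_circle by (simp add: insert_absorb)
  also have "\<dots> = insert (insert top_seg (marked r)) (attach_top ` (circles n w r - {marked r}))" by (simp only: image_insert attach_top_marked)
  also have "attach_top ` (circles n w r - {marked r}) = circles n w r - {marked r}" using attach_top_other by force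
  finally show ?thesis by (simp add: circles'_def)
qed

lemma circles'_False: "circles' r False = insert {top_seg} (circles n w r)" by (simp add: circles'_def)

lemma collapse_pre_True: "C \<subseteq> segs n w \<Longrightarrow> collapse_pre True C = collapse_pre False (attach_top C)"
  unfolding collapse_pre_def attach_top_def using top_seg_notin_segs by (auto simp: collapse_def top_seg_def segs_def)

lemma circles_w'_eq: "circles (Suc n) w' (res_lift r b) = collapse_pre False ` circles' r b"
proof (cases b)
  case True
  have "circles (Suc n) w' (res_lift r b) = collapse_pre True ` circles n w r" using circles_w'_collapse[of r b] True by simp
  also have "\<dots> = collapse_pre False ` attach_top ` circles n w r" using collapse_pre_True circle_subset_segs_w by (force simp: image_image)
  finally show ?thesis using True by (simp add: circles'_def)
next
  case False
  have "top_seg = (0, Suc n)" by (rule top_seg_def)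
  then show ?thesis using circles_w'_collapse[of r b] False by (simp add: circles'_def)
qed

lemma collapse_image_pre: "C \<in> collapse_dom \<Longrightarrow> collapse False ` collapse_pre False C = C"
proof -
  assume "C \<in> collapse_dom"
  then have "C \<subseteq> collapse False ` segs'" using collapse_image[of False] by (simp add: collapse_dom_def top_seg_def)
  then show ?thesis unfolding collapse_pre_def by blast
qed

lemma inj_on_collapse_pre: "inj_on (collapse_pre False) collapse_dom"
  by (rule inj_on_inverseI[where g="\<lambda>S. collapse False ` S"]) (rule collapse_image_pre)

lemma circles'_subset_collapse_dom: "circles' r b \<subseteq> collapse_dom"
  using circle_subset_segs_w by (auto simp: circles'_def collapse_dom_def attach_top_def)

lemma segs_subset_segs': "segs n w \<union> {top_seg} \<subseteq> segs'"
  by (auto simp: segs_def segs'_def length_w' top_seg_def)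

lemma collapse_gap0: "collapse False (0,p) = (0,p)" by (simp add: collapse_def top_seg_def)

lemma nontrivial_collapse_pre: "C \<in> collapse_dom \<Longrightarrow> nontrivial (collapse_pre False C) = nontrivial C"
proof -
  assume C: "C \<in> collapse_dom"
  have "{p. (0,p) \<in> collapse_pre False C} = {p. (0,p) \<in> C}"
    using C segs_subset_segs' by (auto simp: collapse_pre_def collapse_gap0 collapse_dom_def)
  then show ?thesis by (simp add: nontrivial_def)
qed

lemma nontrivial_top_circle: "nontrivial {top_seg}" by (simp add: nontrivial_def top_seg_def)

lemma merge_with_new_circle: "m \<noteq> x \<Longrightarrow> m \<notin> Cr \<Longrightarrow> x \<notin> Cr \<Longrightarrow> c \<in> Cr \<Longrightarrow>
  insert x Cr \<inter> insert m (Cr - {c}) = Cr - {c} \<and> insert x Cr - insert m (Cr - {c}) = {x, c} \<and>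
  insert m (Cr - {c}) - insert x Cr = {m}" by blast

definition lift_gen :: "nat set \<Rightarrow> bool \<Rightarrow> seg set set \<Rightarrow> kgen" where
  "lift_gen r b P = (res_lift r b, collapse_pre False ` P)"

lemma new_in_res_lift: "q \<in> res_lift r b \<longleftrightarrow> b" by (auto simp: res_lift_def new_neq_idx_shift)
lemma idx_shift_in_res_lift: "idx_shift j \<in> res_lift r b \<longleftrightarrow> j \<in> r" by (auto simp: res_lift_def idx_shift_inj idx_shift_neq_new)

lemma res_lift_inj: "res_lift r b = res_lift r2 b2 \<Longrightarrow> r = r2 \<and> b = b2"
proof -
  assume e: "res_lift r b = res_lift r2 b2"
  have "b = b2" using new_in_res_lift[of r b] new_in_res_lift[of r2 b2] e by simp
  moreover have "r = r2"
  proof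
    show "r \<subseteq> r2" using idx_shift_in_res_lift e by blast
    show "r2 \<subseteq> r" using idx_shift_in_res_lift e by blast
  qed
  ultimately show ?thesis by simp
qed

lemma res_lift_subset: "r \<subseteq> {..<length w} \<Longrightarrow> res_lift r b \<subseteq> {..<Suc (length w)}"
  using qL by (auto simp: res_lift_def idx_shift_def)

lemma res_lift_surj: "r' \<subseteq> {..<Suc (length w)} \<Longrightarrow> r' = res_lift {j. j < length w \<and> idx_shift j \<in> r'} (q \<in> r')"
proof -
  assume r': "r' \<subseteq> {..<Suc (length w)}"
  show ?thesis
  proof (rule set_eqI)
    fix x show "x \<in> r' \<longleftrightarrow> x \<in> res_lift {j. j < length w \<and> idx_shift j \<in> r'} (q \<in> r')"
    proof
      assume x: "x \<in> r'"
      then have "x < Suc (length w)" using r' by auto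
      then consider "x = q" | j where "j < length w" "x = idx_shift j" using index_w'_cases by blast
      then show "x \<in> res_lift {j. j < length w \<and> idx_shift j \<in> r'} (q \<in> r')"
        by cases (use x in \<open>auto simp: res_lift_def\<close>)
    next
      assume "x \<in> res_lift {j. j < length w \<and> idx_shift j \<in> r'} (q \<in> r')"
      then show "x \<in> r'" by (auto simp: res_lift_def split: if_splits)
    qed
  qed
qed

lemma res_lift_insert: "insert (idx_shift c) (res_lift r b) = res_lift (insert c r) b" by (auto simp: res_lift_def)
lemma res_lift_insert_new: "insert q (res_lift r False) = res_lift r True" by (auto simp: res_lift_def)

lemma lift_gen_in_gens: "r \<subseteq> {..<length w} \<Longrightarrow> P \<subseteq> circles' r b \<Longrightarrow> lift_gen r b P \<in> gens (Suc n) w'"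
  unfolding gens_def lift_gen_def using res_lift_subset[of r b] circles_w'_eq[of r b] by (auto simp: length_w')

lemma gens_w'_eq_lift_gen:
  assumes "x' \<in> gens (Suc n) w'"
  obtains r b P where "r \<subseteq> {..<length w}" "P \<subseteq> circles' r b" "x' = lift_gen r b P"
proof -
  obtain r' P' where x': "x' = (r', P')" "r' \<subseteq> {..<Suc (length w)}" "P' \<subseteq> circles (Suc n) w' r'"
    using assms by (auto simp: gens_def length_w')
  define r where "r = {j. j < length w \<and> idx_shift j \<in> r'}"
  define b where "b = (q \<in> r')"
  have res_lift: "r' = res_lift r b" unfolding r_def b_def by (rule res_lift_surj[OF x'(2)])
  then have "P' \<subseteq> collapse_pre False ` circles' r b" using x'(3) circles_w'_eq by simp
  then obtain P where P: "P \<subseteq> circles' r b" "P' = collapse_pre False ` P" by (auto simp: subset_image_iff)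
  show ?thesis
  proof (rule that)
    show "r \<subseteq> {..<length w}" unfolding r_def by auto
    show "P \<subseteq> circles' r b" by (rule P(1))
    show "x' = lift_gen r b P" using x'(1) res_lift P(2) by (simp add: lift_gen_def)
  qed
qed

lemma lift_gen_inj:
  assumes "P \<subseteq> circles' r b" "P2 \<subseteq> circles' r2 b2" "lift_gen r b P = lift_gen r2 b2 P2"
  shows "r = r2 \<and> b = b2 \<and> P = P2"
proof -
  have e: "res_lift r b = res_lift r2 b2" "collapse_pre False ` P = collapse_pre False ` P2" using assms(3) by (auto simp: lift_gen_def)
  have u: "P \<subseteq> collapse_dom" "P2 \<subseteq> collapse_dom" using assms(1,2) circles'_subset_collapse_dom by blast+
  have "P = P2" using inj_on_image_eq_iff[OF inj_on_collapse_pre u] e(2) by simp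
  then show ?thesis using res_lift_inj[OF e(1)] by simp
qed

lemma kgr_lift_gen:
  assumes "P \<subseteq> circles' r False"
  shows "kgr (Suc n) w' (lift_gen r False P) = kgr n w (r, P - {{top_seg}}) + (if {top_seg} \<in> P then 1 else -1)"
proof -
  have "kgr (Suc n) w' (lift_gen r False P) = kgr_on (collapse_pre False ` circles' r False) (collapse_pre False ` P)"
    by (simp add: kgr_eq_on lift_gen_def circles_w'_eq)
  also have "\<dots> = kgr_on (circles' r False) P"
    by (rule kgr_on_image[OF inj_on_collapse_pre circles'_subset_collapse_dom assms nontrivial_collapse_pre])
  also have "\<dots> = kgr_on (circles n w r) (P - {{top_seg}}) + (if {top_seg} \<in> P then 1 else -1)"
    unfolding circles'_False by (rule kgr_on_insert[OF finite_circles top_circle_notin_circles nontrivial_top_circle]) (use assms circles'_False in simp)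
  finally show ?thesis by (simp add: kgr_eq_on)
qed

lemma kh_coeff_lift_gen:
  assumes "P \<subseteq> circles' r b" "Q \<subseteq> circles' r2 b2"
  shows "kh_coeff (Suc n) w' (lift_gen r b P) (lift_gen r2 b2 Q) = kh_coeff_on (circles' r b) (circles' r2 b2) P Q"
proof -
  have "kh_coeff (Suc n) w' (lift_gen r b P) (lift_gen r2 b2 Q) =
        kh_coeff_on (collapse_pre False ` circles' r b) (collapse_pre False ` circles' r2 b2) (collapse_pre False ` P) (collapse_pre False ` Q)"
    by (simp add: kh_coeff_eq_on lift_gen_def circles_w'_eq)
  also have "\<dots> = kh_coeff_on (circles' r b) (circles' r2 b2) P Q"
    by (rule kh_coeff_on_image[OF inj_on_collapse_pre circles'_subset_collapse_dom circles'_subset_collapse_dom]) (use assms circles'_subset_collapse_dom in blast)+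
  finally show ?thesis .
qed

lemma kh_coeff_lift_gen_False:
  assumes "P \<subseteq> circles' r False" "Q \<subseteq> circles' r2 False"
  shows "kh_coeff (Suc n) w' (lift_gen r False P) (lift_gen r2 False Q) =
     (({top_seg} \<in> P \<longleftrightarrow> {top_seg} \<in> Q) \<and> kh_coeff n w (r, P - {{top_seg}}) (r2, Q - {{top_seg}}))"
proof -
  have "kh_coeff (Suc n) w' (lift_gen r False P) (lift_gen r2 False Q) = kh_coeff_on (circles' r False) (circles' r2 False) P Q"
    by (rule kh_coeff_lift_gen[OF assms])
  also have "\<dots> = (({top_seg} \<in> P \<longleftrightarrow> {top_seg} \<in> Q) \<and> kh_coeff_on (circles n w r) (circles n w r2) (P - {{top_seg}}) (Q - {{top_seg}}))"
    unfolding circles'_False by (rule kh_coeff_on_insert[OF top_circle_notin_circles top_circle_notin_circles])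
  finally show ?thesis by (simp add: kh_coeff_eq_on)
qed

lemma kh_coeff_lift_gen_new:
  assumes "P \<subseteq> circles' r False" "Q \<subseteq> circles' r True"
  shows "kh_coeff (Suc n) w' (lift_gen r False P) (lift_gen r True Q) =
     ((\<forall>C \<in> circles n w r - {marked r}. C \<in> P \<longleftrightarrow> C \<in> Q) \<and>
      ((marked r \<in> P \<and> {top_seg} \<in> P \<and> insert top_seg (marked r) \<in> Q) \<or>
       ((marked r \<in> P) \<noteq> ({top_seg} \<in> P) \<and> insert top_seg (marked r) \<notin> Q)))"
proof -
  let ?Cr = "circles n w r" and ?M = "insert top_seg (marked r)"
  have qM: "(q,n) \<in> ?M" using marked_circle(2) by simp
  have M1: "?M \<noteq> {top_seg}"
  proof
    assume "?M = {top_seg}" with qM have "(q,n) \<in> {top_seg}" by simp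
    then show False using top_seg_neq_marked_seg by simp
  qed
  have M2: "?M \<notin> ?Cr"
  proof
    assume "?M \<in> ?Cr" then have "top_seg \<notin> ?M" by (rule top_seg_notin_circle)
    then show False by simp
  qed
  have X1: "{top_seg} \<noteq> marked r"
  proof
    assume "{top_seg} = marked r" then have "(q,n) \<in> {top_seg}" using marked_circle(2) by simp
    then show False using top_seg_neq_marked_seg by simp
  qed
  have X2: "{top_seg} \<notin> ?Cr" by (rule top_circle_notin_circles)
  have cp: "marked r \<in> ?Cr" by (rule marked_circle)
  have E: "insert {top_seg} ?Cr \<inter> insert ?M (?Cr - {marked r}) = ?Cr - {marked r} \<and>
      insert {top_seg} ?Cr - insert ?M (?Cr - {marked r}) = {{top_seg}, marked r} \<and>
      insert ?M (?Cr - {marked r}) - insert {top_seg} ?Cr = {?M}"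
    by (rule merge_with_new_circle[OF M1 M2 X2 cp])
  note e1 = conjunct1[OF E] and e2 = conjunct1[OF conjunct2[OF E]] and e3 = conjunct2[OF conjunct2[OF E]]
  have "kh_coeff (Suc n) w' (lift_gen r False P) (lift_gen r True Q) = kh_coeff_on (circles' r False) (circles' r True) P Q"
    by (rule kh_coeff_lift_gen[OF assms])
  also have "\<dots> = kh_local (?Cr - {marked r}) {{top_seg}, marked r} {?M} P Q"
    unfolding circles'_False circles'_True kh_coeff_on_def e1 e2 e3 ..
  also have "\<dots> = ((\<forall>C \<in> circles n w r - {marked r}. C \<in> P \<longleftrightarrow> C \<in> Q) \<and>
      ((marked r \<in> P \<and> {top_seg} \<in> P \<and> insert top_seg (marked r) \<in> Q) \<or>
       ((marked r \<in> P) \<noteq> ({top_seg} \<in> P) \<and> insert top_seg (marked r) \<notin> Q)))" unfolding kh_local_merge[OF X1] by blast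
  finally show ?thesis .
qed

lemma marked_relation: "(marked r = marked r2 \<and> marked r \<in> circles n w r2) \<or>
  (marked r \<in> circles n w r - circles n w r2 \<and> marked r2 \<in> circles n w r2 - circles n w r)"
proof (cases "marked r \<in> circles n w r2")
  case True
  have "marked r = marked r2" by (rule circles_disjoint[OF True marked_circle(1)[of r2] marked_circle(2)[of r] marked_circle(2)[of r2]])
  then show ?thesis using True by simp
next
  case False
  have "marked r2 \<notin> circles n w r"
  proof
    assume h: "marked r2 \<in> circles n w r"
    have "marked r2 = marked r" by (rule circles_disjoint[OF h marked_circle(1)[of r] marked_circle(2)[of r2] marked_circle(2)[of r]])
    then show False using False marked_circle(1)[of r2] by simp
  qed
  then show ?thesis using False marked_circle(1)[of r] marked_circle(1)[of r2] by simp
qed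

lemma kh_coeff_unmark:
  assumes "marked r \<in> P"
  shows "kh_coeff n w (r, P - {marked r}) (r2, Q) \<longleftrightarrow> (marked r2 \<notin> Q \<and> kh_coeff n w (r, P) (r2, insert (marked r2) Q))"
proof -
  let ?I = "circles n w r \<inter> circles n w r2" and ?A = "circles n w r - circles n w r2"
    and ?B = "circles n w r2 - circles n w r"
  have "kh_local ?I ?A ?B (P - {marked r}) Q \<longleftrightarrow> (marked r2 \<notin> Q \<and> kh_local ?I ?A ?B P (insert (marked r2) Q))"
    using marked_relation[of r r2]
  proof
    assume h: "marked r = marked r2 \<and> marked r \<in> circles n w r2"
    have "kh_local ?I ?A ?B (P - {marked r}) Q \<longleftrightarrow> (marked r \<notin> Q \<and> kh_local ?I ?A ?B P (insert (marked r) Q))"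
      by (rule kh_local_unmark_common) (use assms h marked_circle(1)[of r] in auto)
    then show ?thesis using h by simp
  next
    assume h: "marked r \<in> circles n w r - circles n w r2 \<and> marked r2 \<in> circles n w r2 - circles n w r"
    show ?thesis
      by (rule kh_local_unmark_changed) (use h assms in auto)
  qed
  then show ?thesis unfolding kh_coeff_eq_on kh_coeff_on_def fst_conv snd_conv .
qed

lemma kh_coeff_unmarked:
  assumes "marked r \<notin> P" "kh_coeff n w (r, P) (r2, Q)"
  shows "marked r2 \<notin> Q"
  using marked_relation[of r r2]
proof
  assume h: "marked r = marked r2 \<and> marked r \<in> circles n w r2"
  show ?thesis
    using kh_local_unmarked_common[of "marked r" "circles n w r \<inter> circles n w r2" P "circles n w r - circles n w r2"
        "circles n w r2 - circles n w r" Q] assms h marked_circle(1)[of r]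
    unfolding kh_coeff_eq_on kh_coeff_on_def fst_conv snd_conv by auto
next
  assume h: "marked r \<in> circles n w r - circles n w r2 \<and> marked r2 \<in> circles n w r2 - circles n w r"
  show ?thesis
    by (rule kh_local_unmarked_changed[of "marked r" _ _ _ P "circles n w r \<inter> circles n w r2"])
       (use h assms in \<open>auto simp: kh_coeff_eq_on kh_coeff_on_def\<close>)
qed

lemma gens_insert_marked: "(r2, insert (marked r2) Q) \<in> gens n w \<longleftrightarrow> (r2, Q) \<in> gens n w"
  using marked_circle(1)[of r2] by (auto simp: gens_def)

lemma kd_unmark:
  assumes "marked r \<in> P"
  shows "(r2, Q) \<in> kd n w (r, P - {marked r}) \<longleftrightarrow> (marked r2 \<notin> Q \<and> (r2, insert (marked r2) Q) \<in> kd n w (r, P))"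
  unfolding kd_def mem_Collect_eq fst_conv snd_conv gens_insert_marked kh_coeff_unmark[OF assms] by blast

lemma kd_unmarked:
  assumes "marked r \<notin> P" "(r2, Q) \<in> kd n w (r, P)"
  shows "marked r2 \<notin> Q"
  using assms(2) kh_coeff_unmarked[OF assms(1)] unfolding kd_def by auto

lemma fst_lift_gen: "fst (lift_gen r b P) = res_lift r b" by (simp add: lift_gen_def)

lemma kd_lift_gen_False_False:
  assumes "r \<subseteq> {..<length w}" "P \<subseteq> circles' r False" "r2 \<subseteq> {..<length w}" "Q \<subseteq> circles' r2 False"
  shows "lift_gen r2 False Q \<in> kd (Suc n) w' (lift_gen r False P) \<longleftrightarrow>
    (\<exists>c<length w. c \<notin> r \<and> r2 = insert c r) \<and> kh_coeff (Suc n) w' (lift_gen r False P) (lift_gen r2 False Q)"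
proof
  assume "lift_gen r2 False Q \<in> kd (Suc n) w' (lift_gen r False P)"
  then obtain c' where c': "c' < Suc (length w)" "c' \<notin> res_lift r False" "res_lift r2 False = insert c' (res_lift r False)"
    and k: "kh_coeff (Suc n) w' (lift_gen r False P) (lift_gen r2 False Q)"
    unfolding kd_def by (auto simp: fst_lift_gen length_w')
  from c'(1) consider "c' = q" | c where "c < length w" "c' = idx_shift c" using index_w'_cases by blast
  then show "(\<exists>c<length w. c \<notin> r \<and> r2 = insert c r) \<and> kh_coeff (Suc n) w' (lift_gen r False P) (lift_gen r2 False Q)"
  proof cases
    case 1
    then have "res_lift r2 False = res_lift r True" using c'(3) res_lift_insert_new by simp
    then show ?thesis using res_lift_inj by blast
  next
    case 2
    have "c \<notin> r" using c'(2) 2 idx_shift_in_res_lift by simp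
    moreover have "res_lift r2 False = res_lift (insert c r) False" using c'(3) 2 res_lift_insert by simp
    then have "r2 = insert c r" using res_lift_inj by blast
    ultimately show ?thesis using 2 k by blast
  qed
next
  assume h: "(\<exists>c<length w. c \<notin> r \<and> r2 = insert c r) \<and> kh_coeff (Suc n) w' (lift_gen r False P) (lift_gen r2 False Q)"
  then obtain c where c: "c < length w" "c \<notin> r" "r2 = insert c r" by blast
  have "lift_gen r2 False Q \<in> gens (Suc n) w'" by (rule lift_gen_in_gens[OF assms(3,4)])
  moreover have "idx_shift c < length w'" "idx_shift c \<notin> fst (lift_gen r False P)"
    "fst (lift_gen r2 False Q) = insert (idx_shift c) (fst (lift_gen r False P))"
    using c idx_shift_less[OF c(1)] by (auto simp: length_w' fst_lift_gen idx_shift_in_res_lift res_lift_insert)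
  ultimately show "lift_gen r2 False Q \<in> kd (Suc n) w' (lift_gen r False P)"
    unfolding kd_def using h by blast
qed

lemma kd_lift_gen_False_True:
  assumes "r \<subseteq> {..<length w}" "P \<subseteq> circles' r False" "r2 \<subseteq> {..<length w}" "Q \<subseteq> circles' r2 True"
  shows "lift_gen r2 True Q \<in> kd (Suc n) w' (lift_gen r False P) \<longleftrightarrow>
    r2 = r \<and> kh_coeff (Suc n) w' (lift_gen r False P) (lift_gen r True Q)"
proof
  assume "lift_gen r2 True Q \<in> kd (Suc n) w' (lift_gen r False P)"
  then obtain c' where c': "c' < Suc (length w)" "c' \<notin> res_lift r False" "res_lift r2 True = insert c' (res_lift r False)"
    and k: "kh_coeff (Suc n) w' (lift_gen r False P) (lift_gen r2 True Q)"
    unfolding kd_def by (auto simp: fst_lift_gen length_w')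
  from c'(1) consider "c' = q" | c where "c < length w" "c' = idx_shift c" using index_w'_cases by blast
  then show "r2 = r \<and> kh_coeff (Suc n) w' (lift_gen r False P) (lift_gen r True Q)"
  proof cases
    case 1
    then have "res_lift r2 True = res_lift r True" using c'(3) res_lift_insert_new by simp
    then have "r2 = r" using res_lift_inj by blast
    then show ?thesis using k by simp
  next
    case 2
    have "res_lift r2 True = res_lift (insert c r) False" using c'(3) 2 res_lift_insert by simp
    then show ?thesis using res_lift_inj by blast
  qed
next
  assume h: "r2 = r \<and> kh_coeff (Suc n) w' (lift_gen r False P) (lift_gen r True Q)"
  have "lift_gen r2 True Q \<in> gens (Suc n) w'" by (rule lift_gen_in_gens[OF assms(3,4)])
  moreover have "q < length w'" "q \<notin> fst (lift_gen r False P)"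
    "fst (lift_gen r2 True Q) = insert q (fst (lift_gen r False P))"
    using h qL by (auto simp: length_w' fst_lift_gen new_in_res_lift res_lift_insert_new)
  ultimately show "lift_gen r2 True Q \<in> kd (Suc n) w' (lift_gen r False P)"
    unfolding kd_def using h by blast
qed

lemma kd_lift_gen_True_False: "lift_gen r2 False Q \<notin> kd (Suc n) w' (lift_gen r True P)"
proof
  assume "lift_gen r2 False Q \<in> kd (Suc n) w' (lift_gen r True P)"
  then have "res_lift r True \<subseteq> res_lift r2 False" using kd_resolution_mono by (fastforce simp: fst_lift_gen)
  then show False using new_in_res_lift by blast
qed

definition lift_minus :: "kgen \<Rightarrow> kgen" where "lift_minus y = lift_gen (fst y) False (snd y)"
definition lift_move :: "kgen \<Rightarrow> kgen" where "lift_move y = lift_gen (fst y) False (insert {top_seg} (snd y - {marked (fst y)}))"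

lemma gens_components: "y \<in> gens n w \<Longrightarrow> fst y \<subseteq> {..<length w} \<and> snd y \<subseteq> circles n w (fst y)"
  by (auto simp: gens_def)

lemma gens_snd_circles': "y \<in> gens n w \<Longrightarrow> snd y \<subseteq> circles' (fst y) False"
  using gens_components[of y] unfolding circles'_False by blast

lemma gens_lift_move_labels: "y \<in> gens n w \<Longrightarrow> insert {top_seg} (snd y - {marked (fst y)}) \<subseteq> circles' (fst y) False"
  using gens_components[of y] unfolding circles'_False by blast

lemma top_circle_notin_gen: "y \<in> gens n w \<Longrightarrow> {top_seg} \<notin> snd y"
  using gens_components top_circle_notin_circles by blast

lemma inj_on_lift_minus: "inj_on lift_minus (gens n w)"
proof (rule inj_onI)
  fix x y assume "x \<in> gens n w" "y \<in> gens n w" "lift_minus x = lift_minus y"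
  then have "fst x = fst y \<and> False = False \<and> snd x = snd y"
    unfolding lift_minus_def by (intro lift_gen_inj[OF gens_snd_circles' gens_snd_circles'])
  then show "x = y" by (simp add: prod_eq_iff)
qed

lemma inj_on_lift_move: "inj_on lift_move {y \<in> gens n w. marked (fst y) \<in> snd y}"
proof (rule inj_onI)
  fix x y assume x: "x \<in> {y \<in> gens n w. marked (fst y) \<in> snd y}" and y: "y \<in> {y \<in> gens n w. marked (fst y) \<in> snd y}"
    and e: "lift_move x = lift_move y"
  have xy: "fst x = fst y \<and> False = False \<and> insert {top_seg} (snd x - {marked (fst x)}) = insert {top_seg} (snd y - {marked (fst y)})"
    using e unfolding lift_move_def by (intro lift_gen_inj[OF gens_lift_move_labels gens_lift_move_labels]) (use x y in auto)
  have nx: "{top_seg} \<notin> snd x - {marked (fst x)}" "{top_seg} \<notin> snd y - {marked (fst y)}" using top_circle_notin_gen x y by auto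
  have ie: "insert {top_seg} (snd x - {marked (fst x)}) = insert {top_seg} (snd y - {marked (fst y)})"
    using xy by (elim conjE)
  have d: "snd x - {marked (fst x)} = snd y - {marked (fst y)}"
    using iffD1[OF insert_ident[OF nx] ie] .
  have f: "fst x = fst y" using xy by (elim conjE)
  have "snd x = insert (marked (fst x)) (snd x - {marked (fst x)})" using x by auto
  also have "\<dots> = insert (marked (fst y)) (snd y - {marked (fst y)})" using d f by simp
  also have "\<dots> = snd y" using y by auto
  finally have "snd x = snd y" .
  then show "x = y" using xy by (simp add: prod_eq_iff)
qed

lemma lift_minus_neq_lift_move: "x \<in> gens n w \<Longrightarrow> y \<in> gens n w \<Longrightarrow> lift_minus x \<noteq> lift_move y"
proof
  assume x: "x \<in> gens n w" and y: "y \<in> gens n w" and e: "lift_minus x = lift_move y"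
  have "fst x = fst y \<and> False = False \<and> snd x = insert {top_seg} (snd y - {marked (fst y)})"
    using e unfolding lift_minus_def lift_move_def by (intro lift_gen_inj[OF gens_snd_circles'[OF x] gens_lift_move_labels[OF y]])
  then show False using top_circle_notin_gen[OF x] by simp
qed

lemma kd_sources_lift_minus:
  assumes Y': "Y' \<subseteq> gens (Suc n) w'" and z: "z \<in> gens n w"
  shows "{y' \<in> Y'. lift_minus z \<in> kd (Suc n) w' y'} = lift_minus ` {y \<in> gens n w. lift_minus y \<in> Y' \<and> z \<in> kd n w y}"
proof (rule set_eqI, rule iffI)
  fix y' assume "y' \<in> {y' \<in> Y'. lift_minus z \<in> kd (Suc n) w' y'}"
  then have y': "y' \<in> Y'" "lift_minus z \<in> kd (Suc n) w' y'" by auto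
  have yg': "y' \<in> gens (Suc n) w'" using Y' y'(1) by blast
  obtain r b P where rbP: "r \<subseteq> {..<length w}" "P \<subseteq> circles' r b" "y' = lift_gen r b P"
    by (rule gens_w'_eq_lift_gen[OF yg'])
  have b: "\<not> b"
  proof
    assume b "b"
    then show False using y'(2) rbP kd_lift_gen_True_False unfolding lift_minus_def by simp
  qed
  have zs: "fst z \<subseteq> {..<length w}" "snd z \<subseteq> circles' (fst z) False" using gens_components[OF z] gens_snd_circles'[OF z] by auto
  have k: "(\<exists>c<length w. c \<notin> r \<and> fst z = insert c r) \<and> kh_coeff (Suc n) w' (lift_gen r False P) (lift_gen (fst z) False (snd z))"
    using y'(2) kd_lift_gen_False_False[OF rbP(1) _ zs] rbP b unfolding lift_minus_def by simp
  have k2: "({top_seg} \<in> P \<longleftrightarrow> {top_seg} \<in> snd z) \<and> kh_coeff n w (r, P - {{top_seg}}) (fst z, snd z - {{top_seg}})"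
    using k kh_coeff_lift_gen_False[of P r "snd z" "fst z"] rbP zs b by simp
  have nP: "{top_seg} \<notin> P" using k2 top_circle_notin_gen[OF z] by simp
  then have Pc: "P \<subseteq> circles n w r" using rbP(2) b by (auto simp: circles'_False)
  have yg: "(r, P) \<in> gens n w" using rbP(1) Pc by (simp add: gens_def)
  have "z \<in> kd n w (r, P)"
    unfolding kd_def using z k k2 nP top_circle_notin_gen[OF z] by (auto simp: prod_eq_iff)
  moreover have "lift_minus (r, P) = y'" using rbP b by (simp add: lift_minus_def)
  ultimately show "y' \<in> lift_minus ` {y \<in> gens n w. lift_minus y \<in> Y' \<and> z \<in> kd n w y}" using yg y'(1) by force
next
  fix y' assume "y' \<in> lift_minus ` {y \<in> gens n w. lift_minus y \<in> Y' \<and> z \<in> kd n w y}"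
  then obtain y where y: "y \<in> gens n w" "lift_minus y \<in> Y'" "z \<in> kd n w y" "y' = lift_minus y" by blast
  have ys: "fst y \<subseteq> {..<length w}" "snd y \<subseteq> circles' (fst y) False" using gens_components[OF y(1)] gens_snd_circles'[OF y(1)] by auto
  have zs: "fst z \<subseteq> {..<length w}" "snd z \<subseteq> circles' (fst z) False" using gens_components[OF z] gens_snd_circles'[OF z] by auto
  obtain c where c: "c < length w" "c \<notin> fst y" "fst z = insert c (fst y)" "kh_coeff n w y z"
    using y(3) unfolding kd_def by auto
  have "kh_coeff (Suc n) w' (lift_gen (fst y) False (snd y)) (lift_gen (fst z) False (snd z))"
    using kh_coeff_lift_gen_False[OF ys(2) zs(2)] c(4) top_circle_notin_gen[OF y(1)] top_circle_notin_gen[OF z] by simp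
  then have "lift_minus z \<in> kd (Suc n) w' (lift_minus y)"
    unfolding lift_minus_def using kd_lift_gen_False_False[OF ys zs] c by blast
  then show "y' \<in> {y' \<in> Y'. lift_minus z \<in> kd (Suc n) w' y'}" using y by simp
qed

lemma psi_w'_eq: "psi w' = lift_minus (psi w)"
proof -
  have "{j. j < length w' \<and> \<not> snd (w' ! j)} = idx_shift ` {j. j < length w \<and> \<not> snd (w ! j)}"
  proof (rule set_eqI, rule iffI)
    fix x assume "x \<in> {j. j < length w' \<and> \<not> snd (w' ! j)}"
    then have x: "x < Suc (length w)" "\<not> snd (w' ! x)" by (auto simp: length_w')
    from x(1) consider "x = q" | j where "j < length w" "x = idx_shift j" using index_w'_cases by blast
    then show "x \<in> idx_shift ` {j. j < length w \<and> \<not> snd (w ! j)}"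
    proof cases
      case 1 then show ?thesis using x(2) by (simp add: nth_w'_new)
    next
      case 2 then show ?thesis using x(2) by (auto simp: nth_w'_shift)
    qed
  next
    fix x assume "x \<in> idx_shift ` {j. j < length w \<and> \<not> snd (w ! j)}"
    then obtain j where "j < length w" "\<not> snd (w ! j)" "x = idx_shift j" by blast
    then show "x \<in> {j. j < length w' \<and> \<not> snd (w' ! j)}" using idx_shift_less by (auto simp: nth_w'_shift length_w')
  qed
  then show ?thesis by (simp add: psi_def lift_minus_def lift_gen_def res_lift_def)
qed

lemma lift_minus_in_gens: "y \<in> gens n w \<Longrightarrow> lift_minus y \<in> gens (Suc n) w'"
  unfolding lift_minus_def by (rule lift_gen_in_gens) (use gens_components[of y] gens_snd_circles'[of y] in auto)

lemma lift_move_in_gens: "y \<in> gens n w \<Longrightarrow> lift_move y \<in> gens (Suc n) w'"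
  unfolding lift_move_def by (rule lift_gen_in_gens) (use gens_components[of y] gens_lift_move_labels[of y] in auto)

lemma kgr_lift_minus: "y \<in> gens n w \<Longrightarrow> kgr (Suc n) w' (lift_minus y) = kgr n w y - 1"
  unfolding lift_minus_def using kgr_lift_gen[OF gens_snd_circles'[of y]] top_circle_notin_gen[of y] by simp

lemma kgr_lift_move: "y \<in> gens n w \<Longrightarrow> marked (fst y) \<in> snd y \<Longrightarrow>
   kgr (Suc n) w' (lift_move y) = kgr n w y - (if nontrivial (marked (fst y)) then 2 else 0) + 1"
proof -
  assume y: "y \<in> gens n w" "marked (fst y) \<in> snd y"
  have nx: "{top_seg} \<notin> snd y - {marked (fst y)}" using top_circle_notin_gen[OF y(1)] by blast
  have "kgr (Suc n) w' (lift_move y) = kgr n w (fst y, snd y - {marked (fst y)}) + 1"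
    unfolding lift_move_def using kgr_lift_gen[OF gens_lift_move_labels[OF y(1)]] nx by simp
  also have "kgr n w (fst y, snd y - {marked (fst y)}) = kgr n w y - (if nontrivial (marked (fst y)) then 2 else 0)"
    unfolding kgr_eq_on fst_conv snd_conv
    by (rule kgr_on_remove[OF finite_circles y(2)]) (use gens_components[OF y(1)] in auto)
  finally show ?thesis .
qed

lemma kd_lift_gen_top:
  assumes y: "y \<in> gens n w" and z: "z \<in> gens n w"
  shows "lift_gen (fst z) False (if eb then insert {top_seg} (snd z) else snd z) \<in>
           kd (Suc n) w' (lift_gen (fst y) False (if ea then insert {top_seg} (snd y) else snd y))
         \<longleftrightarrow> (ea = eb \<and> z \<in> kd n w y)"
proof -
  let ?P = "if ea then insert {top_seg} (snd y) else snd y" and ?Q = "if eb then insert {top_seg} (snd z) else snd z"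
  have Ps: "?P \<subseteq> circles' (fst y) False" "?Q \<subseteq> circles' (fst z) False"
    using gens_snd_circles'[OF y] gens_snd_circles'[OF z] by (auto simp: circles'_False)
  have nx: "{top_seg} \<notin> snd y" "{top_seg} \<notin> snd z" using top_circle_notin_gen y z by auto
  have m1: "?P - {{top_seg}} = snd y" "?Q - {{top_seg}} = snd z" using nx by auto
  have m2: "({top_seg} \<in> ?P) = ea" "({top_seg} \<in> ?Q) = eb" using nx by auto
  have "lift_gen (fst z) False ?Q \<in> kd (Suc n) w' (lift_gen (fst y) False ?P) \<longleftrightarrow>
      (\<exists>c<length w. c \<notin> fst y \<and> fst z = insert c (fst y)) \<and> (ea = eb) \<and> kh_coeff n w y z"
    unfolding kd_lift_gen_False_False[OF conjunct1[OF gens_components[OF y]] Ps(1) conjunct1[OF gens_components[OF z]] Ps(2)]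
      kh_coeff_lift_gen_False[OF Ps] m1 m2 by simp
  also have "\<dots> \<longleftrightarrow> (ea = eb \<and> z \<in> kd n w y)"
    unfolding kd_def using z by auto
  finally show ?thesis .
qed

lemma boundary_destabilize:
  assumes Y': "Y' \<in> filt (Suc n) w' i" and d: "kd_chain (Suc n) w' Y' = {psi w'}"
  shows "\<exists>Y \<in> filt n w (i + 1). kd_chain n w Y = {psi w}"
proof -
  define Y where "Y = {y \<in> gens n w. lift_minus y \<in> Y'}"
  have Y'g: "Y' \<subseteq> gens (Suc n) w'" "finite Y'" using Y' by (auto simp: filt_def)
  have Yg: "Y \<subseteq> gens n w" by (auto simp: Y_def)
  have injY: "inj_on lift_minus Y" using inj_on_subset[OF inj_on_lift_minus Yg] .
  have "lift_minus ` Y \<subseteq> Y'" by (auto simp: Y_def)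
  then have finY: "finite Y" using Y'g(2) injY finite_image_iff finite_subset by metis
  have kY: "\<forall>y\<in>Y. kgr n w y \<le> i + 1"
  proof
    fix y assume y: "y \<in> Y"
    then have "lift_minus y \<in> Y'" "y \<in> gens n w" by (auto simp: Y_def)
    then have "kgr (Suc n) w' (lift_minus y) \<le> i" using Y' by (auto simp: filt_def)
    then show "kgr n w y \<le> i + 1" using kgr_lift_minus[OF \<open>y \<in> gens n w\<close>] by simp
  qed
  have "Y \<in> filt n w (i + 1)" using finY Yg kY by (simp add: filt_def)
  moreover have "kd_chain n w Y = {psi w}"
  proof (rule set_eqI)
    fix z
    show "z \<in> kd_chain n w Y \<longleftrightarrow> z \<in> {psi w}"
    proof (cases "z \<in> gens n w")
      case False
      then show ?thesis using kd_chain_subset_gens psi_in_gens by blast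
    next
      case True
      have "{y \<in> Y. z \<in> kd n w y} = {y \<in> gens n w. lift_minus y \<in> Y' \<and> z \<in> kd n w y}" by (auto simp: Y_def)
      then have "card {y \<in> Y. z \<in> kd n w y} = card (lift_minus ` {y \<in> gens n w. lift_minus y \<in> Y' \<and> z \<in> kd n w y})"
        using card_image[OF inj_on_subset[OF inj_on_lift_minus]] by (metis (no_types, lifting) mem_Collect_eq subsetI)
      also have "\<dots> = card {y' \<in> Y'. lift_minus z \<in> kd (Suc n) w' y'}" using kd_sources_lift_minus[OF Y'g(1) True] by simp
      finally have "z \<in> kd_chain n w Y \<longleftrightarrow> lift_minus z \<in> kd_chain (Suc n) w' Y'" by (simp add: mem_kd_chain)
      also have "\<dots> \<longleftrightarrow> lift_minus z = lift_minus (psi w)" using d psi_w'_eq by simp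
      also have "\<dots> \<longleftrightarrow> z = psi w" using inj_onD[OF inj_on_lift_minus _ True psi_in_gens] by auto
      finally show ?thesis by simp
    qed
  qed
  ultimately show ?thesis by blast
qed

lemma Collect_image_Un: "{y \<in> f1 ` A \<union> f2 ` B. P y} = f1 ` {a \<in> A. P (f1 a)} \<union> f2 ` {b \<in> B. P (f2 b)}"
  by auto

lemma kh_coeff_lift_minus_new:
  assumes yg: "y \<in> gens n w" and QT: "Q \<subseteq> circles' (fst y) True"
  shows "kh_coeff (Suc n) w' (lift_minus y) (lift_gen (fst y) True Q) \<longleftrightarrow>
    ((\<forall>C \<in> circles n w (fst y) - {marked (fst y)}. C \<in> snd y \<longleftrightarrow> C \<in> Q) \<and> marked (fst y) \<in> snd y \<and> insert top_seg (marked (fst y)) \<notin> Q)"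
proof -
  have nx: "{top_seg} \<notin> snd y" using top_circle_notin_gen[OF yg] .
  show ?thesis unfolding lift_minus_def kh_coeff_lift_gen_new[OF gens_snd_circles'[OF yg] QT] using nx by blast
qed

lemma kh_coeff_lift_move_new:
  assumes yg: "y \<in> gens n w" and cp: "marked (fst y) \<in> snd y" and QT: "Q \<subseteq> circles' (fst y) True"
  shows "kh_coeff (Suc n) w' (lift_move y) (lift_gen (fst y) True Q) \<longleftrightarrow>
    ((\<forall>C \<in> circles n w (fst y) - {marked (fst y)}. C \<in> snd y \<longleftrightarrow> C \<in> Q) \<and> insert top_seg (marked (fst y)) \<notin> Q)"
proof -
  let ?P = "insert {top_seg} (snd y - {marked (fst y)})"
  have ne: "marked (fst y) \<noteq> {top_seg}" using marked_circle(2)[of "fst y"] top_seg_neq_marked_seg by auto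
  have h1: "marked (fst y) \<notin> ?P" "{top_seg} \<in> ?P" using ne by auto
  have h2: "(\<forall>C \<in> circles n w (fst y) - {marked (fst y)}. C \<in> ?P \<longleftrightarrow> C \<in> Q) \<longleftrightarrow>
        (\<forall>C \<in> circles n w (fst y) - {marked (fst y)}. C \<in> snd y \<longleftrightarrow> C \<in> Q)"
  proof (rule ball_cong[OF refl])
    fix C assume C: "C \<in> circles n w (fst y) - {marked (fst y)}"
    have "C \<noteq> {top_seg}" using C top_circle_notin_circles[of "fst y"] by (metis DiffD1)
    moreover have "C \<noteq> marked (fst y)" using C by simp
    ultimately show "(C \<in> ?P \<longleftrightarrow> C \<in> Q) \<longleftrightarrow> (C \<in> snd y \<longleftrightarrow> C \<in> Q)" by simp
  qed
  show ?thesis unfolding lift_move_def kh_coeff_lift_gen_new[OF gens_lift_move_labels[OF yg] QT] h2 using h1 by simp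
qed

definition lift_plus :: "kgen \<Rightarrow> kgen" where
  "lift_plus z = lift_gen (fst z) False (insert {top_seg} (snd z))"

definition unmark :: "kgen \<Rightarrow> kgen" where
  "unmark y = (fst y, snd y - {marked (fst y)})"

lemma lift_move_eq_lift_plus: "lift_move y = lift_plus (unmark y)"
  by (simp add: lift_move_def lift_plus_def unmark_def)

lemma unmark_in_gens: "y \<in> gens n w \<Longrightarrow> unmark y \<in> gens n w"
  by (auto simp: gens_def unmark_def)

lemma kd_lift_minus_iff:
  "y \<in> gens n w \<Longrightarrow> z \<in> gens n w \<Longrightarrow> lift_minus z \<in> kd (Suc n) w' (lift_minus y) \<longleftrightarrow> z \<in> kd n w y"
  using kd_lift_gen_top[where ea=False and eb=False] by (simp add: lift_minus_def)

lemma kd_lift_plus_iff: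
  "y \<in> gens n w \<Longrightarrow> z \<in> gens n w \<Longrightarrow> lift_plus z \<in> kd (Suc n) w' (lift_plus y) \<longleftrightarrow> z \<in> kd n w y"
  using kd_lift_gen_top[where ea=True and eb=True] by (simp add: lift_plus_def)

lemma lift_plus_notin_kd_lift_minus:
  "y \<in> gens n w \<Longrightarrow> z \<in> gens n w \<Longrightarrow> lift_plus z \<notin> kd (Suc n) w' (lift_minus y)"
  using kd_lift_gen_top[where ea=False and eb=True] by (simp add: lift_minus_def lift_plus_def)

lemma lift_minus_notin_kd_lift_plus:
  "y \<in> gens n w \<Longrightarrow> z \<in> gens n w \<Longrightarrow> lift_minus z \<notin> kd (Suc n) w' (lift_plus y)"
  using kd_lift_gen_top[where ea=True and eb=False] by (simp add: lift_minus_def lift_plus_def)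

lemma lift_plus_neq_lift_minus: "y \<in> gens n w \<Longrightarrow> z \<in> gens n w \<Longrightarrow> lift_plus z \<noteq> lift_minus y"
proof
  assume y: "y \<in> gens n w" and z: "z \<in> gens n w" and e: "lift_plus z = lift_minus y"
  have "insert {top_seg} (snd z) \<subseteq> circles' (fst z) False"
    using gens_snd_circles'[OF z] by (simp add: circles'_False)
  then have "insert {top_seg} (snd z) = snd y"
    using lift_gen_inj[OF _ gens_snd_circles'[OF y]] e by (simp add: lift_plus_def lift_minus_def)
  then show False using top_circle_notin_gen[OF y] by blast
qed

lemma gens_w'_cases:
  assumes "z' \<in> gens (Suc n) w'"
  obtains (minus) z where "z \<in> gens n w" "z' = lift_minus z"
  | (plus) z where "z \<in> gens n w" "z' = lift_plus z"
  | (new) r Q where "r \<subseteq> {..<length w}" "Q \<subseteq> circles' r True" "z' = lift_gen r True Q"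
proof -
  obtain r b Q where rbQ: "r \<subseteq> {..<length w}" "Q \<subseteq> circles' r b" "z' = lift_gen r b Q"
    by (rule gens_w'_eq_lift_gen[OF assms])
  show ?thesis
  proof (cases b)
    case True
    then show ?thesis using new[OF rbQ(1)] rbQ(2,3) by simp
  next
    case False
    define z where "z = (r, Q - {{top_seg}})"
    have z: "z \<in> gens n w" using rbQ False by (auto simp: z_def gens_def circles'_False)
    show ?thesis
    proof (cases "{top_seg} \<in> Q")
      case True
      then have "z' = lift_plus z" using rbQ False by (simp add: z_def lift_plus_def insert_absorb)
      with z show ?thesis by (rule plus)
    next
      case notin: False
      then have "z' = lift_minus z" using rbQ False by (simp add: z_def lift_minus_def)
      with z show ?thesis by (rule minus)
    qed
  qed
qed

lemma kd_lift_minus_new_iff: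
  assumes y: "y \<in> gens n w" and r: "r \<subseteq> {..<length w}" and Q: "Q \<subseteq> circles' r True"
  shows "lift_gen r True Q \<in> kd (Suc n) w' (lift_minus y) \<longleftrightarrow>
    r = fst y \<and> kh_coeff (Suc n) w' (lift_minus y) (lift_gen (fst y) True Q)"
  unfolding lift_minus_def
  by (rule kd_lift_gen_False_True[OF conjunct1[OF gens_components[OF y]] gens_snd_circles'[OF y] r Q])

lemma kd_lift_move_new_iff:
  assumes y: "y \<in> gens n w" and r: "r \<subseteq> {..<length w}" and Q: "Q \<subseteq> circles' r True"
  shows "lift_gen r True Q \<in> kd (Suc n) w' (lift_move y) \<longleftrightarrow>
    r = fst y \<and> kh_coeff (Suc n) w' (lift_move y) (lift_gen (fst y) True Q)"
  unfolding lift_move_def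
  by (rule kd_lift_gen_False_True[OF conjunct1[OF gens_components[OF y]] gens_lift_move_labels[OF y] r Q])

text \<open>At a generator whose new crossing is 1-resolved, the merge of the new circle with the
  marked circle sees v+ v- and v- v+ alike, so the two lifts of a marked generator have the same
  boundary there.\<close>

lemma kd_lift_move_new_eq:
  assumes y: "y \<in> gens n w" "marked (fst y) \<in> snd y"
    and r: "r \<subseteq> {..<length w}" and Q: "Q \<subseteq> circles' r True"
  shows "lift_gen r True Q \<in> kd (Suc n) w' (lift_move y) \<longleftrightarrow> lift_gen r True Q \<in> kd (Suc n) w' (lift_minus y)"
proof (cases "r = fst y")
  case True
  then have Q': "Q \<subseteq> circles' (fst y) True" using Q by simp
  show ?thesis
    unfolding kd_lift_minus_new_iff[OF y(1) r Q] kd_lift_move_new_iff[OF y(1) r Q]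
      kh_coeff_lift_minus_new[OF y(1) Q'] kh_coeff_lift_move_new[OF y Q'] using y(2) by simp
qed (simp add: kd_lift_minus_new_iff[OF y(1) r Q] kd_lift_move_new_iff[OF y(1) r Q])

lemma lift_new_notin_kd_lift_minus:
  assumes y: "y \<in> gens n w" "marked (fst y) \<notin> snd y"
    and r: "r \<subseteq> {..<length w}" and Q: "Q \<subseteq> circles' r True"
  shows "lift_gen r True Q \<notin> kd (Suc n) w' (lift_minus y)"
proof
  assume "lift_gen r True Q \<in> kd (Suc n) w' (lift_minus y)"
  then have "r = fst y" "kh_coeff (Suc n) w' (lift_minus y) (lift_gen (fst y) True Q)"
    unfolding kd_lift_minus_new_iff[OF y(1) r Q] by simp_all
  then show False using kh_coeff_lift_minus_new[OF y(1)] y(2) Q by simp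
qed

text \<open>stab_chain Y is Y \<otimes> v- + (X Y) \<otimes> v+; the generators of Y whose marked circle is labelled v-
  are killed by X.\<close>

definition marked_part :: "kgen set \<Rightarrow> kgen set" where
  "marked_part Y = {y \<in> Y. marked (fst y) \<in> snd y}"

definition stab_chain :: "kgen set \<Rightarrow> kgen set" where
  "stab_chain Y = lift_minus ` Y \<union> lift_move ` marked_part Y"

lemma stab_chain_filt:
  assumes Y: "Y \<in> filt n w i"
  shows "stab_chain Y \<in> filt (Suc n) w' (i + 1)"
proof -
  have Yg: "Y \<subseteq> gens n w" "finite Y" and kY: "\<forall>y\<in>Y. kgr n w y \<le> i" using Y by (auto simp: filt_def)
  have "kgr (Suc n) w' y' \<le> i + 1" if "y' \<in> stab_chain Y" for y'
  proof -
    from that consider y where "y \<in> Y" "y' = lift_minus y" | y where "y \<in> marked_part Y" "y' = lift_move y"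
      by (auto simp: stab_chain_def)
    then show ?thesis
    proof cases
      case 1
      then have "y \<in> gens n w" "kgr n w y \<le> i" using Yg kY by auto
      then show ?thesis using kgr_lift_minus[of y] 1 by simp
    next
      case 2
      then have "y \<in> gens n w" "marked (fst y) \<in> snd y" "kgr n w y \<le> i"
        using Yg kY by (auto simp: marked_part_def)
      then show ?thesis using kgr_lift_move[of y] 2 by auto
    qed
  qed
  moreover have "stab_chain Y \<subseteq> gens (Suc n) w'"
    using lift_minus_in_gens lift_move_in_gens Yg by (auto simp: stab_chain_def marked_part_def)
  moreover have "finite (stab_chain Y)" using Yg by (simp add: stab_chain_def marked_part_def)
  ultimately show ?thesis by (simp add: filt_def)
qed

lemma card_kd_sources_stab_chain:
  assumes Yg: "Y \<subseteq> gens n w" "finite Y"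
  shows "card {y' \<in> stab_chain Y. z' \<in> kd (Suc n) w' y'} =
    card {y \<in> Y. z' \<in> kd (Suc n) w' (lift_minus y)} + card {y \<in> marked_part Y. z' \<in> kd (Suc n) w' (lift_move y)}"
proof -
  let ?S0 = "{y \<in> Y. z' \<in> kd (Suc n) w' (lift_minus y)}"
    and ?S1 = "{y \<in> marked_part Y. z' \<in> kd (Suc n) w' (lift_move y)}"
  have M: "marked_part Y \<subseteq> Y" by (auto simp: marked_part_def)
  have sources: "{y' \<in> stab_chain Y. z' \<in> kd (Suc n) w' y'} = lift_minus ` ?S0 \<union> lift_move ` ?S1"
    unfolding stab_chain_def by (rule Collect_image_Un[where P="\<lambda>y'. z' \<in> kd (Suc n) w' y'"])
  have "card (lift_minus ` ?S0 \<union> lift_move ` ?S1) = card (lift_minus ` ?S0) + card (lift_move ` ?S1)"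
  proof (rule card_Un_disjoint)
    show "finite (lift_minus ` ?S0)" "finite (lift_move ` ?S1)"
      using Yg(2) by (simp_all add: marked_part_def)
    show "lift_minus ` ?S0 \<inter> lift_move ` ?S1 = {}"
    proof (rule equals0I)
      fix y' assume "y' \<in> lift_minus ` ?S0 \<inter> lift_move ` ?S1"
      then obtain x y where "x \<in> Y" "y \<in> Y" "lift_minus x = lift_move y"
        using M by blast
      then show False using lift_minus_neq_lift_move[of x y] Yg(1) by blast
    qed
  qed
  also have "card (lift_minus ` ?S0) = card ?S0"
    by (rule card_image, rule inj_on_subset[OF inj_on_lift_minus]) (use Yg in auto)
  also have "card (lift_move ` ?S1) = card ?S1"
    by (rule card_image, rule inj_on_subset[OF inj_on_lift_move]) (use Yg in \<open>auto simp: marked_part_def\<close>)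
  finally show ?thesis unfolding sources .
qed

lemma kd_chain_stab_chain_lift_minus:
  assumes Yg: "Y \<subseteq> gens n w" "finite Y" and z: "z \<in> gens n w"
  shows "lift_minus z \<in> kd_chain (Suc n) w' (stab_chain Y) \<longleftrightarrow> z \<in> kd_chain n w Y"
proof -
  have S0: "{y \<in> Y. lift_minus z \<in> kd (Suc n) w' (lift_minus y)} = {y \<in> Y. z \<in> kd n w y}"
    using kd_lift_minus_iff[OF _ z] Yg(1) by blast
  have S1: "{y \<in> marked_part Y. lift_minus z \<in> kd (Suc n) w' (lift_move y)} = {}"
    using lift_minus_notin_kd_lift_plus[OF unmark_in_gens z] Yg(1)
    by (auto simp: marked_part_def lift_move_eq_lift_plus)
  show ?thesis unfolding mem_kd_chain card_kd_sources_stab_chain[OF Yg] S0 S1 by simp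
qed

lemma kd_unmark_sources:
  "{y \<in> marked_part Y. (r, Q) \<in> kd n w (unmark y)} =
    (if marked r \<in> Q then {} else {y \<in> Y. (r, insert (marked r) Q) \<in> kd n w y})"
proof -
  have unmark: "(r, Q) \<in> kd n w (unmark y) \<longleftrightarrow> marked r \<notin> Q \<and> (r, insert (marked r) Q) \<in> kd n w y"
    if "y \<in> marked_part Y" for y
    using kd_unmark[of "fst y" "snd y" r Q] that by (simp add: marked_part_def unmark_def)
  have marked: "y \<in> marked_part Y" if "y \<in> Y" "(r, insert (marked r) Q) \<in> kd n w y" for y
  proof (rule ccontr)
    assume "y \<notin> marked_part Y"
    then have "marked (fst y) \<notin> snd y" using that(1) by (simp add: marked_part_def)
    then show False using kd_unmarked[of "fst y" "snd y" r "insert (marked r) Q"] that(2) by simp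
  qed
  show ?thesis
  proof (intro set_eqI iffI)
    fix y assume "y \<in> {y \<in> marked_part Y. (r, Q) \<in> kd n w (unmark y)}"
    then have y: "y \<in> marked_part Y" "(r, Q) \<in> kd n w (unmark y)" by simp_all
    then have "marked r \<notin> Q" "(r, insert (marked r) Q) \<in> kd n w y" using unmark[OF y(1)] by simp_all
    moreover have "y \<in> Y" using y(1) by (simp add: marked_part_def)
    ultimately show "y \<in> (if marked r \<in> Q then {} else {y \<in> Y. (r, insert (marked r) Q) \<in> kd n w y})"
      by simp
  next
    fix y assume y: "y \<in> (if marked r \<in> Q then {} else {y \<in> Y. (r, insert (marked r) Q) \<in> kd n w y})"
    then have "marked r \<notin> Q" "y \<in> Y" "(r, insert (marked r) Q) \<in> kd n w y"
      by (simp_all split: if_splits)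
    moreover from this have "y \<in> marked_part Y" using marked by blast
    ultimately show "y \<in> {y \<in> marked_part Y. (r, Q) \<in> kd n w (unmark y)}"
      using unmark by simp
  qed
qed

lemma kd_chain_stab_chain_lift_plus:
  assumes Yg: "Y \<subseteq> gens n w" "finite Y" and z: "z \<in> gens n w"
  shows "lift_plus z \<in> kd_chain (Suc n) w' (stab_chain Y) \<longleftrightarrow>
    marked (fst z) \<notin> snd z \<and> (fst z, insert (marked (fst z)) (snd z)) \<in> kd_chain n w Y"
proof -
  have S0: "{y \<in> Y. lift_plus z \<in> kd (Suc n) w' (lift_minus y)} = {}"
    using lift_plus_notin_kd_lift_minus[OF _ z] Yg(1) by blast
  have S1: "{y \<in> marked_part Y. lift_plus z \<in> kd (Suc n) w' (lift_move y)} =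
      {y \<in> marked_part Y. (fst z, snd z) \<in> kd n w (unmark y)}"
    using kd_lift_plus_iff[OF unmark_in_gens z] Yg(1)
    by (auto simp: marked_part_def lift_move_eq_lift_plus)
  show ?thesis
    unfolding mem_kd_chain card_kd_sources_stab_chain[OF Yg] S0 S1 kd_unmark_sources by simp
qed

lemma lift_new_notin_kd_chain_stab_chain:
  assumes Yg: "Y \<subseteq> gens n w" "finite Y" and r: "r \<subseteq> {..<length w}" and Q: "Q \<subseteq> circles' r True"
  shows "lift_gen r True Q \<notin> kd_chain (Suc n) w' (stab_chain Y)"
proof -
  have S: "{y \<in> Y. lift_gen r True Q \<in> kd (Suc n) w' (lift_minus y)} =
      {y \<in> marked_part Y. lift_gen r True Q \<in> kd (Suc n) w' (lift_move y)}"
  proof (intro set_eqI)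
    fix y
    show "y \<in> {y \<in> Y. lift_gen r True Q \<in> kd (Suc n) w' (lift_minus y)} \<longleftrightarrow>
        y \<in> {y \<in> marked_part Y. lift_gen r True Q \<in> kd (Suc n) w' (lift_move y)}"
    proof (cases "y \<in> Y")
      case True
      then have y: "y \<in> gens n w" using Yg(1) by blast
      show ?thesis
      proof (cases "marked (fst y) \<in> snd y")
        case True
        then show ?thesis using kd_lift_move_new_eq[OF y True r Q] \<open>y \<in> Y\<close> by (simp add: marked_part_def)
      next
        case False
        then show ?thesis using lift_new_notin_kd_lift_minus[OF y False r Q] by (simp add: marked_part_def)
      qed
    qed (simp add: marked_part_def)
  qed
  show ?thesis unfolding mem_kd_chain card_kd_sources_stab_chain[OF Yg] S by simp
qed

lemma boundary_stabilize:
  assumes Y: "Y \<in> filt n w i" and d: "kd_chain n w Y = {psi w}"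
  shows "\<exists>Y' \<in> filt (Suc n) w' (i + 1). kd_chain (Suc n) w' Y' = {psi w'}"
proof -
  have Yg: "Y \<subseteq> gens n w" "finite Y" using Y by (auto simp: filt_def)
  have "z' \<in> kd_chain (Suc n) w' (stab_chain Y) \<longleftrightarrow> z' = psi w'" for z'
  proof (cases "z' \<in> gens (Suc n) w'")
    case False
    then show ?thesis using kd_chain_subset_gens lift_minus_in_gens[OF psi_in_gens] psi_w'_eq by auto
  next
    case True
    then show ?thesis
    proof (cases rule: gens_w'_cases)
      case (minus z)
      show ?thesis
        unfolding minus(2) psi_w'_eq kd_chain_stab_chain_lift_minus[OF Yg minus(1)] d
          inj_on_eq_iff[OF inj_on_lift_minus minus(1) psi_in_gens] by simp
    next
      case (plus z)
      have "(fst z, insert (marked (fst z)) (snd z)) \<noteq> psi w" by (simp add: psi_def)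
      then show ?thesis
        using kd_chain_stab_chain_lift_plus[OF Yg plus(1)] d plus psi_w'_eq
          lift_plus_neq_lift_minus[OF psi_in_gens plus(1)] by auto
    next
      case (new r Q)
      have "z' \<noteq> psi w'"
        using new(3) psi_w'_eq res_lift_inj by (auto simp: lift_minus_def lift_gen_def)
      then show ?thesis using lift_new_notin_kd_chain_stab_chain[OF Yg new(1,2)] new(3) by blast
    qed
  qed
  then show ?thesis using stab_chain_filt[OF Y] by blast
qed

end

theorem mainTheorem5:
  assumes "braid_word n w"
    and "innermost_point n w q"
  shows "kappa n w \<le> kappa (Suc n) (stabilize n w q)
         \<and> kappa (Suc n) (stabilize n w q) \<le> kappa n w + 2"
proof -
  have "fst q \<le> length w" using assms(2) by (auto simp: innermost_point_def segs_def)
  then interpret S: stabilization n w "fst q" using assms(1) by unfold_locales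
  have w': "stabilize n w q = S.w'" by (simp add: stabilize_def S.w'_def)
  have "kappa n w \<le> kappa (Suc n) S.w' + ereal (real_of_int (int n - int (Suc n) + 1))"
    by (rule kappa_le_shift) (rule S.boundary_destabilize)
  moreover have "kappa (Suc n) S.w' \<le> kappa n w + ereal (real_of_int (int (Suc n) - int n + 1))"
    by (rule kappa_le_shift) (rule S.boundary_stabilize)
  ultimately show ?thesis unfolding w' by simp
qed

end
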